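(* Let $\alpha$ be a quadratic algebraic unit which is not a root of unity, and let $J$ be a nonzero ideal in $\mathbb{Z}[\alpha]$. Let $A$ be the automorphism of $J\cong\mathbb{Z}^2$ given by multiplication by $\alpha$, and let $\pi=J\rtimes_A\mathbb{Z}$. Then (1) $\pi$ is a $\mathbb{S}ol^3$-group; (2) the groups corresponding to two such pairs $(\alpha,J)$ and $(\beta,K)$ are isomorphic if and only if either $\beta=\alpha$ or $\beta=\alpha^{-1}$ and $[K]=[J]$, or $\beta=\bar\alpha$ or $\beta=\bar\alpha^{-1}$ and $[K]=\overline{[J]}$; (3) given $\alpha$, the number of isomorphism classes of such groups $\pi$ is finite.
   Context: A $\mathbb{S}ol^3$-group is the fundamental group of a closed $\mathbb{S}ol^3$-manifold. $\bar\alpha$ denotes the Galois conjugate of $\alpha$ in the quadratic field $\mathbb{Q}[\alpha]$; the Galois involution preserves $\mathbb{Z}[\alpha]$ and hence acts on ideals and ideal classes. $[J]$ denotes the isomorphism class of $J$ as a $\mathbb{Z}[\alpha]$-module (ideal class), and $\overline{[J]}$ its Galois conjugate. *)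

theory Defs
  imports "HOL-Analysis.Analysis" "HOL-Algebra.Group"
begin

type_synonym sol_pt = "real \<times> real \<times> real"

definition sol_length :: "(real \<Rightarrow> sol_pt) \<Rightarrow> real" where
  "sol_length g = integral {0..1} (\<lambda>t.
     let v = vector_derivative g (at t within {0..1}); z = snd (snd (g t)) in
     sqrt (exp (2 * z) * (fst v)\<^sup>2 + exp (- 2 * z) * (fst (snd v))\<^sup>2 + (snd (snd v))\<^sup>2))"

definition sol_dist :: "sol_pt \<Rightarrow> sol_pt \<Rightarrow> real" where
  "sol_dist p q = Inf {sol_length g | g. g C1_differentiable_on {0..1} \<and> g 0 = p \<and> g 1 = q}"

definition sol_isometry :: "(sol_pt \<Rightarrow> sol_pt) \<Rightarrow> bool" where
  "sol_isometry f \<longleftrightarrow> bij f \<and> (\<forall>p q. sol_dist (f p) (f q) = sol_dist p q)"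

definition transf_group :: "(sol_pt \<Rightarrow> sol_pt) set \<Rightarrow> (sol_pt \<Rightarrow> sol_pt) monoid" where
  "transf_group \<Gamma> = \<lparr>carrier = \<Gamma>, monoid.mult = (\<circ>), one = id\<rparr>"

text \<open>A closed Sol^3-manifold is a quotient Sol/Gamma by a group Gamma of isometries
  acting freely and properly discontinuously with compact quotient; since Sol is
  simply connected its fundamental group is Gamma.\<close>
definition sol3_group :: "('g, 'b) monoid_scheme \<Rightarrow> bool" where
  "sol3_group G \<longleftrightarrow> group G \<and> (\<exists>\<Gamma>.
     (\<forall>f\<in>\<Gamma>. sol_isometry f) \<and> group (transf_group \<Gamma>) \<and>
     (\<forall>f\<in>\<Gamma>. \<forall>p. f p = p \<longrightarrow> f = id) \<and>
     (\<forall>K. compact K \<longrightarrow> finite {f\<in>\<Gamma>. f ` K \<inter> K \<noteq> {}}) \<and>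
     (\<exists>K. compact K \<and> (\<Union>f\<in>\<Gamma>. f ` K) = UNIV) \<and>
     G \<cong> transf_group \<Gamma>)"

text \<open>alpha is a (real) quadratic algebraic unit: root of a monic integer polynomial
  x^2 - t x + n with n = +-1, and of degree exactly 2 over Q (i.e. irrational).\<close>
definition quadratic_unit :: "real \<Rightarrow> bool" where
  "quadratic_unit a \<longleftrightarrow> a \<notin> \<rat> \<and>
     (\<exists>t n :: int. (n = 1 \<or> n = -1) \<and> a\<^sup>2 - of_int t * a + of_int n = 0)"

definition root_of_unity :: "real \<Rightarrow> bool" where
  "root_of_unity a \<longleftrightarrow> (\<exists>k::nat. k > 0 \<and> a ^ k = 1)"

definition Zring :: "real \<Rightarrow> real set" where
  "Zring a = {poly (map_poly of_int p) a | p :: int poly. True}"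

definition is_ideal :: "real \<Rightarrow> real set \<Rightarrow> bool" where
  "is_ideal a J \<longleftrightarrow> J \<subseteq> Zring a \<and> 0 \<in> J \<and>
     (\<forall>x\<in>J. \<forall>y\<in>J. x + y \<in> J) \<and> (\<forall>x\<in>J. - x \<in> J) \<and>
     (\<forall>r\<in>Zring a. \<forall>x\<in>J. r * x \<in> J)"

definition nonzero_ideal :: "real \<Rightarrow> real set \<Rightarrow> bool" where
  "nonzero_ideal a J \<longleftrightarrow> is_ideal a J \<and> J \<noteq> {0}"

definition gconj :: "real \<Rightarrow> real" where
  "gconj a = (THE b. b \<noteq> a \<and> (\<exists>t n :: int. a\<^sup>2 - of_int t * a + of_int n = 0
                                  \<and> b\<^sup>2 - of_int t * b + of_int n = 0))"

definition gal :: "real \<Rightarrow> real \<Rightarrow> real" where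
  "gal a x = (SOME y. \<exists>p :: int poly. x = poly (map_poly of_int p) a \<and>
                                      y = poly (map_poly of_int p) (gconj a))"

text \<open>[J] = [K]: J and K are isomorphic as Z[alpha]-modules.\<close>
definition same_class :: "real \<Rightarrow> real set \<Rightarrow> real set \<Rightarrow> bool" where
  "same_class a J K \<longleftrightarrow> (\<exists>f. bij_betw f J K \<and>
     (\<forall>x\<in>J. \<forall>y\<in>J. f (x + y) = f x + f y) \<and>
     (\<forall>r\<in>Zring a. \<forall>x\<in>J. f (r * x) = r * f x))"

definition sdp :: "real \<Rightarrow> real set \<Rightarrow> (real \<times> int) monoid" where
  "sdp a J = \<lparr>carrier = J \<times> UNIV,
              monoid.mult = (\<lambda>(j, m) (k, n). (j + a powi m * k, m + n)),
              one = (0, 0)\<rparr>"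

end

theory Submission
  imports Defs
begin

text \<open>(1) Send \<open>(j, m) \<in> J \<rtimes> \<int>\<close> to the affine map
  \<open>(x, y, z) \<mapsto> (\<alpha>\<^sup>m x + j, \<alpha>\<^sup>c\<^sup>m y + j\<^sup>c, z - m log \<bar>\<alpha>\<bar>)\<close>, where \<open>\<alpha>\<^sup>c, j\<^sup>c\<close> are
  Galois conjugates. Since \<open>\<bar>\<alpha> \<alpha>\<^sup>c\<bar> = 1\<close> these are isometries of Sol; as the two real
  embeddings make \<open>J\<close> a lattice in \<open>\<real>\<^sup>2\<close>, the action is free, properly discontinuous and
  cocompact.

  (2) In \<open>J \<rtimes> \<int>\<close> the elements commuting with all their conjugates form exactly \<open>J\<close>,
  so an isomorphism restricts to an additive bijection \<open>J \<rightarrow> K\<close> turning multiplication by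
  \<open>\<alpha>\<close> into multiplication by \<open>\<beta>\<^sup>\<plusminus>\<^sup>1\<close>. Then \<open>\<beta>\<^sup>\<plusminus>\<^sup>1\<close> is a root of the minimal
  polynomial of \<open>\<alpha>\<close>, i.e. \<open>\<alpha>\<close> or \<open>\<alpha>\<^sup>c\<close>, and the bijection is \<open>\<int>[\<alpha>]\<close>-linear, up to
  the Galois involution in the second case. Conversely such module isomorphisms extend to the
  semidirect products.

  (3) Every ideal is a multiple of a lattice \<open>u\<int> + (v + \<alpha>)\<int>\<close> (Hermite normal form), and a
  reduction step in the manner of Gauss' reduction of binary quadratic forms shrinks \<open>u\<close>
  until it is bounded by the discriminant, leaving finitely many lattices.\<close>

section \<open>Arithmetic in \<open>\<int>[\<alpha>]\<close>\<close>

locale real_quadratic_unit =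
  fixes a :: real and t n :: int
  assumes irrational: "a \<notin> \<rat>"
    and root: "a\<^sup>2 - of_int t * a + of_int n = 0"
    and unit: "n = 1 \<or> n = -1"
begin

lemma a_squared: "a * a = of_int t * a - of_int n"
  using root by (simp add: power2_eq_square algebra_simps)

lemma coords_unique:
  assumes "of_int p + of_int q * a = of_int p' + of_int q' * a"
  shows "p = p' \<and> q = q'"
proof (cases "q = q'")
  case False
  hence "a = of_int (p - p') / of_int (q' - q)" using assms by (simp add: field_simps)
  thus ?thesis using irrational by simp
qed (use assms in simp)

lemma coords_zero: "of_int p + of_int q * a = 0 \<Longrightarrow> p = 0 \<and> q = 0"
  using coords_unique[of p q 0 0] by simp

definition a_conj :: real where "a_conj = of_int t - a"

lemma a_plus_a_conj: "a + a_conj = of_int t"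
  unfolding a_conj_def by simp

lemma a_times_a_conj: "a * a_conj = of_int n"
  unfolding a_conj_def using a_squared by (simp add: algebra_simps)

lemma a_conj_squared: "a_conj * a_conj = of_int t * a_conj - of_int n"
  unfolding a_conj_def using a_squared by (simp add: algebra_simps)

lemma coords_conj: "of_int p + of_int q * a_conj = of_int (p + q * t) + of_int (- q) * a"
  unfolding a_conj_def by (simp add: algebra_simps)

lemma coords_conj_zero: "of_int p + of_int q * a_conj = 0 \<Longrightarrow> p = 0 \<and> q = 0"
  unfolding coords_conj using coords_zero by fastforce

lemma a_nonzero: "a \<noteq> 0"
  using irrational by auto

lemma a_conj_nonzero: "a_conj \<noteq> 0"
  using a_times_a_conj unit by auto

lemma a_conj_neq_a: "a_conj \<noteq> a"
  using coords_unique[of 0 1 t "-1"] by (auto simp: a_conj_def)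

lemma abs_a_neq_1: "\<bar>a\<bar> \<noteq> 1"
  using irrational by (auto simp: abs_if split: if_splits)

lemma abs_a_times_abs_a_conj: "\<bar>a\<bar> * \<bar>a_conj\<bar> = 1"
  using a_times_a_conj unit by (auto simp: abs_mult[symmetric])

lemma inverse_a: "inverse a = of_int n * a_conj"
  using a_times_a_conj unit a_nonzero by (auto simp: field_simps)

lemma inverse_a_conj: "inverse a_conj = of_int n * a"
  using a_times_a_conj unit a_conj_nonzero by (auto simp: field_simps)

lemma mult_coords:
  assumes "z * z = of_int t * z - of_int n"
  shows "(of_int p + of_int q * z) * (of_int p' + of_int q' * z) =
     of_int (p*p' - n*q*q') + of_int (p*q' + q*p' + t*q*q') * (z::real)"
proof -
  have "(of_int p + of_int q * z) * (of_int p' + of_int q' * z) =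
      of_int p * of_int p' + (of_int p * of_int q' + of_int q * of_int p') * z + of_int q * of_int q' * (z*z)"
    by (simp add: algebra_simps)
  thus ?thesis unfolding assms by (simp add: algebra_simps)
qed

text \<open>Reducing an integer polynomial modulo \<open>x\<^sup>2 - t x + n\<close> gives the same coordinates
  at both roots.\<close>
lemma poly_coords:
  "\<exists>p q. poly (map_poly of_int P) a = of_int p + of_int q * a
     \<and> poly (map_poly of_int P) a_conj = of_int p + of_int q * a_conj"
proof (induction P)
  case (pCons c P)
  then obtain p q where "poly (map_poly of_int P) a = of_int p + of_int q * a"
     "poly (map_poly of_int P) a_conj = of_int p + of_int q * a_conj" by blast
  thus ?case
    using a_squared a_conj_squared
    by (intro exI[of _ "c - n * q"] exI[of _ "p + t * q"]) (simp add: map_poly_pCons, algebra)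
qed (intro exI[of _ 0], simp)

lemma Zring_eq: "Zring a = {of_int p + of_int q * a | p q. True}"
proof (intro equalityI subsetI)
  fix x assume "x \<in> Zring a"
  then obtain P where "x = poly (map_poly of_int P) a" unfolding Zring_def by auto
  thus "x \<in> {of_int p + of_int q * a | p q. True}" using poly_coords[of P] by auto
next
  fix x assume "x \<in> {of_int p + of_int q * a | p q. True}"
  then obtain p q where "x = of_int p + of_int q * a" by auto
  hence "poly (map_poly of_int [:p, q:]) a = x" by (simp add: map_poly_pCons)
  thus "x \<in> Zring a" unfolding Zring_def by blast
qed

lemma ZringI: "of_int p + of_int q * a \<in> Zring a"
  unfolding Zring_eq by blast

lemma ZringE:
  assumes "x \<in> Zring a" obtains p q where "x = of_int p + of_int q * a"
  using assms unfolding Zring_eq by blast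

lemma Zring_of_int: "of_int k \<in> Zring a"
  using ZringI[of k 0] by simp

lemma Zring_one: "1 \<in> Zring a"
  using Zring_of_int[of 1] by simp

lemma Zring_a: "a \<in> Zring a"
  using ZringI[of 0 1] by simp

lemma Zring_a_conj: "a_conj \<in> Zring a"
  using ZringI[of t "-1"] unfolding a_conj_def by simp

lemma Zring_mult: "x \<in> Zring a \<Longrightarrow> y \<in> Zring a \<Longrightarrow> x * y \<in> Zring a"
  by (elim ZringE) (simp only: mult_coords[OF a_squared] ZringI)

lemma Zring_inverse_a: "inverse a \<in> Zring a"
  using inverse_a Zring_mult Zring_of_int Zring_a_conj by simp

lemma Zring_power: "x \<in> Zring a \<Longrightarrow> x ^ k \<in> Zring a"
  by (induction k) (auto intro: Zring_mult Zring_one)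

lemma Zring_powi: "a powi m \<in> Zring a"
  using Zring_power[OF Zring_a] Zring_power[OF Zring_inverse_a]
  by (cases "m \<ge> 0") (simp_all add: power_int_def power_inverse)

lemma powi_neq_1: "m \<noteq> 0 \<Longrightarrow> a powi m \<noteq> 1"
proof
  assume m: "m \<noteq> 0" and "a powi m = 1"
  hence "\<bar>a\<bar> powi m = 1" by (metis abs_one power_int_abs)
  moreover have "\<bar>a\<bar> > 0" "\<bar>a\<bar> \<noteq> 1" using a_nonzero abs_a_neq_1 by auto
  ultimately show False using m
    by (metis less_le power_int_strict_increasing power_int_0_right power_int_strict_decreasing
         not_less_iff_gr_or_eq linorder_neq_iff power_int_strict_antimono power_int_strict_mono)
qed

lemma gconj_eq: "gconj a = a_conj"
  unfolding gconj_def
proof (rule the_equality)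
  show "a_conj \<noteq> a \<and> (\<exists>t' n'::int. a\<^sup>2 - of_int t' * a + of_int n' = 0
          \<and> a_conj\<^sup>2 - of_int t' * a_conj + of_int n' = 0)"
    using a_conj_neq_a root a_conj_squared
    by (intro conjI exI[of _ t] exI[of _ n]) (auto simp: power2_eq_square)
next
  fix b assume "b \<noteq> a \<and> (\<exists>t' n'::int. a\<^sup>2 - of_int t' * a + of_int n' = 0
          \<and> b\<^sup>2 - of_int t' * b + of_int n' = 0)"
  then obtain t' n' :: int where b: "b \<noteq> a" "a\<^sup>2 - of_int t' * a + of_int n' = 0"
     "b\<^sup>2 - of_int t' * b + of_int n' = 0" by blast
  have coords: "of_int (-n') + of_int t' * a = of_int (-n) + of_int t * a"
    using b(2) root by (simp add: algebra_simps power2_eq_square)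
  hence "t' = t" "n' = n" using coords_unique[OF coords] by auto
  hence "(b - a) * (b + a - of_int t) = 0"
    using b(3) root by (simp add: power2_eq_square algebra_simps)
  thus "b = a_conj" using b(1) unfolding a_conj_def by simp
qed

lemma gal_coords: "gal a (of_int p + of_int q * a) = of_int p + of_int q * a_conj"
proof -
  have "\<exists>P::int poly. of_int p + of_int q * a = poly (map_poly of_int P) a \<and>
          of_int p + of_int q * a_conj = poly (map_poly of_int P) (gconj a)"
    by (intro exI[of _ "[:p, q:]"]) (simp add: map_poly_pCons gconj_eq)
  hence "\<exists>P::int poly. of_int p + of_int q * a = poly (map_poly of_int P) a \<and>
          gal a (of_int p + of_int q * a) = poly (map_poly of_int P) (gconj a)"
    unfolding gal_def by (rule someI_ex[OF exI])
  then obtain P :: "int poly" where P: "of_int p + of_int q * a = poly (map_poly of_int P) a"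
     "gal a (of_int p + of_int q * a) = poly (map_poly of_int P) a_conj" by (auto simp: gconj_eq)
  obtain p' q' where "poly (map_poly of_int P) a = of_int p' + of_int q' * a"
     "poly (map_poly of_int P) a_conj = of_int p' + of_int q' * a_conj" using poly_coords by blast
  moreover from this(1) have "p = p' \<and> q = q'" using P(1) coords_unique by simp
  ultimately show ?thesis using P(2) by simp
qed

lemma gal_of_int: "gal a (of_int k) = of_int k"
  using gal_coords[of k 0] by simp

lemma gal_a: "gal a a = a_conj"
  using gal_coords[of 0 1] by simp

lemma gal_Zring: "x \<in> Zring a \<Longrightarrow> gal a x \<in> Zring a"
  by (elim ZringE) (simp only: gal_coords coords_conj ZringI)

lemma gal_add: "x \<in> Zring a \<Longrightarrow> y \<in> Zring a \<Longrightarrow> gal a (x + y) = gal a x + gal a y"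
proof (elim ZringE)
  fix p q p' q' assume "x = of_int p + of_int q * a" "y = of_int p' + of_int q' * a"
  moreover have "x + y = of_int (p + p') + of_int (q + q') * a" if
    "x = of_int p + of_int q * a" "y = of_int p' + of_int q' * a"
    using that by (simp add: algebra_simps)
  ultimately show ?thesis by (simp only: gal_coords) (simp add: algebra_simps)
qed

lemma gal_mult: "x \<in> Zring a \<Longrightarrow> y \<in> Zring a \<Longrightarrow> gal a (x * y) = gal a x * gal a y"
  by (elim ZringE) (simp only: mult_coords[OF a_squared] mult_coords[OF a_conj_squared] gal_coords)

lemma gal_gal: "x \<in> Zring a \<Longrightarrow> gal a (gal a x) = x"
proof (elim ZringE)
  fix p q assume "x = of_int p + of_int q * a"
  thus ?thesis by (simp only: gal_coords coords_conj)
qed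

lemma gal_nonzero: "x \<in> Zring a \<Longrightarrow> x \<noteq> 0 \<Longrightarrow> gal a x \<noteq> 0"
  using gal_gal gal_of_int[of 0] by force

lemma inj_on_gal: "inj_on (gal a) (Zring a)"
  by (metis gal_gal inj_onI)

lemma gal_a_conj: "gal a a_conj = a"
  using gal_gal[OF Zring_a] gal_a by simp

lemma gal_inverse_a: "gal a (inverse a) = inverse a_conj"
  using inverse_a inverse_a_conj gal_mult gal_of_int gal_a_conj Zring_of_int Zring_a_conj by simp

lemma gal_powi: "gal a (a powi m) = a_conj powi m"
proof -
  have "gal a (x ^ k) = gal a x ^ k" if "x \<in> Zring a" for x k
    by (induction k) (simp_all add: gal_of_int[of 1, simplified] gal_mult Zring_power that)
  hence "gal a (a ^ k) = a_conj ^ k" "gal a (inverse a ^ k) = inverse a_conj ^ k" for k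
    using Zring_a Zring_inverse_a gal_a gal_inverse_a by simp_all
  thus ?thesis by (cases "m \<ge> 0") (simp_all add: power_int_def power_inverse)
qed

lemma Zring_a_conj_powi: "a_conj powi m \<in> Zring a"
  using gal_powi gal_Zring Zring_powi by metis

lemma gal_a_conj_powi: "gal a (a_conj powi m) = a powi m"
  using gal_gal[OF Zring_powi] gal_powi by metis


lemma ideal_subset: "is_ideal a J \<Longrightarrow> J \<subseteq> Zring a"
  unfolding is_ideal_def by blast

lemma ideal_zero: "is_ideal a J \<Longrightarrow> 0 \<in> J"
  unfolding is_ideal_def by blast

lemma ideal_add: "is_ideal a J \<Longrightarrow> x \<in> J \<Longrightarrow> y \<in> J \<Longrightarrow> x + y \<in> J"
  unfolding is_ideal_def by blast

lemma ideal_neg: "is_ideal a J \<Longrightarrow> x \<in> J \<Longrightarrow> - x \<in> J"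
  unfolding is_ideal_def by blast

lemma ideal_mult: "is_ideal a J \<Longrightarrow> r \<in> Zring a \<Longrightarrow> x \<in> J \<Longrightarrow> r * x \<in> J"
  unfolding is_ideal_def by blast

lemma ideal_powi_mult: "is_ideal a J \<Longrightarrow> x \<in> J \<Longrightarrow> a powi m * x \<in> J"
  using ideal_mult Zring_powi by blast

lemma ideal_of_int_mult: "is_ideal a J \<Longrightarrow> x \<in> J \<Longrightarrow> of_int k * x \<in> J"
  using ideal_mult Zring_of_int by blast

lemma nonzero_idealE:
  assumes "nonzero_ideal a J"
  obtains x where "is_ideal a J" "x \<in> J" "x \<noteq> 0"
  using assms unfolding nonzero_ideal_def is_ideal_def by blast

end

section \<open>The groups \<open>J \<rtimes> \<int>\<close>\<close>

lemma sdp_mult [simp]: "(j, m) \<otimes>\<^bsub>sdp a J\<^esub> (k, l) = (j + a powi m * k, m + l)"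
  by (simp add: sdp_def)

lemma sdp_carrier: "carrier (sdp a J) = J \<times> UNIV"
  by (simp add: sdp_def)

lemma sdp_one [simp]: "\<one>\<^bsub>sdp a J\<^esub> = (0, 0)"
  by (simp add: sdp_def)

lemma (in real_quadratic_unit) group_sdp:
  assumes J: "is_ideal a J" shows "group (sdp a J)"
proof (rule groupI)
  fix x y assume "x \<in> carrier (sdp a J)" "y \<in> carrier (sdp a J)"
  thus "x \<otimes>\<^bsub>sdp a J\<^esub> y \<in> carrier (sdp a J)"
    using ideal_add[OF J] ideal_powi_mult[OF J] by (cases x, cases y) (auto simp: sdp_carrier)
next
  fix x y z assume "x \<in> carrier (sdp a J)" "y \<in> carrier (sdp a J)" "z \<in> carrier (sdp a J)"
  thus "x \<otimes>\<^bsub>sdp a J\<^esub> y \<otimes>\<^bsub>sdp a J\<^esub> z = x \<otimes>\<^bsub>sdp a J\<^esub> (y \<otimes>\<^bsub>sdp a J\<^esub> z)"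
    using a_nonzero by (cases x, cases y, cases z) (simp add: power_int_add algebra_simps)
next
  fix x assume "x \<in> carrier (sdp a J)"
  then obtain j m where x: "x = (j, m)" "j \<in> J" by (auto simp: sdp_carrier)
  have "(- (a powi (-m) * j), -m) \<in> carrier (sdp a J)"
    using ideal_neg[OF J ideal_powi_mult[OF J x(2)]] by (simp add: sdp_carrier)
  moreover have "(- (a powi (-m) * j), -m) \<otimes>\<^bsub>sdp a J\<^esub> x = \<one>\<^bsub>sdp a J\<^esub>"
    by (simp add: x)
  ultimately show "\<exists>y\<in>carrier (sdp a J). y \<otimes>\<^bsub>sdp a J\<^esub> x = \<one>\<^bsub>sdp a J\<^esub>" by blast
qed (use ideal_zero[OF J] in \<open>auto simp: sdp_carrier\<close>)

lemma sdp_iso_of_equivariant_bij: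
  assumes bij: "bij_betw g K J" and add: "\<forall>x\<in>K. \<forall>y\<in>K. g (x + y) = g x + g y"
    and e: "e = 1 \<or> e = -1"
    and equivariant: "\<forall>m. \<forall>k\<in>K. g (b powi m * k) = a powi (e * m) * g k"
    and closed: "\<forall>m. \<forall>k\<in>K. b powi m * k \<in> K"
  shows "(\<lambda>(k, m). (g k, e * m)) \<in> iso (sdp b K) (sdp a J)"
proof (rule isoI)
  have im: "g ` K = J" and inj: "inj_on g K" using bij unfolding bij_betw_def by auto
  show "(\<lambda>(k, m). (g k, e * m)) \<in> hom (sdp b K) (sdp a J)"
  proof (rule homI)
    fix x assume "x \<in> carrier (sdp b K)"
    thus "(case x of (k, m) \<Rightarrow> (g k, e * m)) \<in> carrier (sdp a J)"
      using im by (cases x) (auto simp: sdp_carrier)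
  next
    fix x y assume "x \<in> carrier (sdp b K)" "y \<in> carrier (sdp b K)"
    then obtain k m l p where "x = (k, m)" "y = (l, p)" "k \<in> K" "l \<in> K" by (auto simp: sdp_carrier)
    thus "(case x \<otimes>\<^bsub>sdp b K\<^esub> y of (k, m) \<Rightarrow> (g k, e * m)) =
      (case x of (k, m) \<Rightarrow> (g k, e * m)) \<otimes>\<^bsub>sdp a J\<^esub> (case y of (k, m) \<Rightarrow> (g k, e * m))"
      using add closed equivariant by (simp add: algebra_simps)
  qed
  have "(\<lambda>(k, m). (g k, e * m)) ` (K \<times> UNIV) = J \<times> UNIV"
  proof (intro equalityI subsetI)
    fix z assume "z \<in> (\<lambda>(k, m). (g k, e * m)) ` (K \<times> UNIV)"
    then obtain k m where "k \<in> K" "z = (g k, e * m)" by auto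
    thus "z \<in> J \<times> UNIV" using im by blast
  next
    fix z assume "z \<in> J \<times> (UNIV :: int set)"
    then obtain k m where k: "k \<in> K" "z = (g k, m)" using im by blast
    have "(\<lambda>(k, m). (g k, e * m)) (k, e * m) = z" using k(2) e by auto
    thus "z \<in> (\<lambda>(k, m). (g k, e * m)) ` (K \<times> UNIV)" using k(1) by (intro image_eqI) auto
  qed
  moreover have "inj_on (\<lambda>(k, m). (g k, e * m)) (K \<times> UNIV)"
    using inj e unfolding inj_on_def by auto
  ultimately show "bij_betw (\<lambda>(k, m). (g k, e * m)) (carrier (sdp b K)) (carrier (sdp a J))"
    unfolding bij_betw_def sdp_carrier by blast
qed

text \<open>An isomorphism invariant which in \<open>J \<rtimes> \<int>\<close> singles out \<open>J\<close>.\<close>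
definition conj_commuting :: "('g, 'b) monoid_scheme \<Rightarrow> 'g set" where
  "conj_commuting G = {g \<in> carrier G. \<forall>h\<in>carrier G. \<forall>g'\<in>carrier G.
      h \<otimes>\<^bsub>G\<^esub> g = g' \<otimes>\<^bsub>G\<^esub> h \<longrightarrow> g \<otimes>\<^bsub>G\<^esub> g' = g' \<otimes>\<^bsub>G\<^esub> g}"

lemma iso_conj_commuting:
  assumes G: "group G" and f: "f \<in> iso G H" and g: "g \<in> conj_commuting G"
  shows "f g \<in> conj_commuting H"
proof -
  have hom: "\<And>x y. x \<in> carrier G \<Longrightarrow> y \<in> carrier G \<Longrightarrow> f (x \<otimes>\<^bsub>G\<^esub> y) = f x \<otimes>\<^bsub>H\<^esub> f y"
    and inj: "inj_on f (carrier G)" and surj: "f ` carrier G = carrier H"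
    using f unfolding iso_def hom_def bij_betw_def by auto
  have gG: "g \<in> carrier G" using g unfolding conj_commuting_def by blast
  show ?thesis unfolding conj_commuting_def
  proof (intro CollectI conjI ballI impI)
    show "f g \<in> carrier H" using gG surj by blast
    fix h' g'' assume "h' \<in> carrier H" "g'' \<in> carrier H" and conj: "h' \<otimes>\<^bsub>H\<^esub> f g = g'' \<otimes>\<^bsub>H\<^esub> h'"
    then obtain h g' where h: "h \<in> carrier G" "h' = f h" and g': "g' \<in> carrier G" "g'' = f g'"
      using surj by blast
    have "f (h \<otimes>\<^bsub>G\<^esub> g) = f (g' \<otimes>\<^bsub>G\<^esub> h)" using hom h g' gG conj by metis
    hence "h \<otimes>\<^bsub>G\<^esub> g = g' \<otimes>\<^bsub>G\<^esub> h"
      using inj G h g' gG by (simp add: inj_on_eq_iff group.is_monoid monoid.m_closed)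
    hence "g \<otimes>\<^bsub>G\<^esub> g' = g' \<otimes>\<^bsub>G\<^esub> g" using g h g' unfolding conj_commuting_def by blast
    thus "f g \<otimes>\<^bsub>H\<^esub> g'' = g'' \<otimes>\<^bsub>H\<^esub> f g" using hom gG g' by metis
  qed
qed

lemma iso_image_conj_commuting:
  assumes G: "group G" and H: "group H" and f: "f \<in> iso G H"
  shows "f ` conj_commuting G = conj_commuting H"
proof (rule equalityI)
  show "f ` conj_commuting G \<subseteq> conj_commuting H" using iso_conj_commuting[OF G f] by blast
  show "conj_commuting H \<subseteq> f ` conj_commuting G"
  proof
    fix h assume h: "h \<in> conj_commuting H"
    have f': "inv_into (carrier G) f \<in> iso H G" using group.iso_set_sym[OF G f] .
    have "h \<in> f ` carrier G" using h f unfolding conj_commuting_def iso_def bij_betw_def by blast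
    hence "h = f (inv_into (carrier G) f h)" by (simp add: f_inv_into_f)
    moreover have "inv_into (carrier G) f h \<in> conj_commuting G" using iso_conj_commuting[OF H f' h] .
    ultimately show "h \<in> f ` conj_commuting G" by blast
  qed
qed

lemma (in real_quadratic_unit) conj_commuting_sdp:
  assumes J: "nonzero_ideal a J" shows "conj_commuting (sdp a J) = J \<times> {0}"
proof (intro equalityI subsetI)
  obtain k where I: "is_ideal a J" and k: "k \<in> J" "k \<noteq> 0" using J by (rule nonzero_idealE)
  fix x assume x: "x \<in> conj_commuting (sdp a J)"
  then obtain j m where jm: "x = (j, m)" "j \<in> J" unfolding conj_commuting_def by (auto simp: sdp_carrier)
  show "x \<in> J \<times> {0}"
  proof (rule ccontr)
    assume "x \<notin> J \<times> {0}"
    hence m: "m \<noteq> 0" using jm by simp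
    text \<open>Conjugating \<open>x\<close> by \<open>(k, 0)\<close> gives an element that does not commute with \<open>x\<close>.\<close>
    define g' where "g' = (k + j - a powi m * k, m)"
    have "g' \<in> carrier (sdp a J)" unfolding g'_def sdp_carrier
      using ideal_add[OF I ideal_add[OF I k(1) jm(2)] ideal_neg[OF I ideal_powi_mult[OF I k(1)]]] by simp
    moreover have "(k, 0) \<in> carrier (sdp a J)" using k by (simp add: sdp_carrier)
    moreover have "(k, 0) \<otimes>\<^bsub>sdp a J\<^esub> x = g' \<otimes>\<^bsub>sdp a J\<^esub> (k, 0)" by (simp add: jm g'_def)
    ultimately have "x \<otimes>\<^bsub>sdp a J\<^esub> g' = g' \<otimes>\<^bsub>sdp a J\<^esub> x"
      using x unfolding conj_commuting_def by blast
    hence "k * (1 - a powi m) * (1 - a powi m) = 0" by (simp add: jm g'_def algebra_simps)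
    thus False using k(2) powi_neq_1[OF m] by simp
  qed
next
  fix x assume "x \<in> J \<times> {0::int}"
  then obtain j where x: "x = (j, 0)" "j \<in> J" by auto
  show "x \<in> conj_commuting (sdp a J)" unfolding conj_commuting_def
  proof (intro CollectI conjI ballI impI)
    show "x \<in> carrier (sdp a J)" using x by (simp add: sdp_carrier)
    fix h g' assume "h \<in> carrier (sdp a J)" "g' \<in> carrier (sdp a J)"
       "h \<otimes>\<^bsub>sdp a J\<^esub> x = g' \<otimes>\<^bsub>sdp a J\<^esub> h"
    thus "x \<otimes>\<^bsub>sdp a J\<^esub> g' = g' \<otimes>\<^bsub>sdp a J\<^esub> x" by (cases h, cases g') (auto simp: x)
  qed
qed

lemma sdp_zero_mem: "group (sdp a J) \<Longrightarrow> 0 \<in> J"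
  using monoid.one_closed[OF group.is_monoid] by (fastforce simp: sdp_carrier)

lemma sdp_closed:
  assumes "group (sdp a J)" "j \<in> J" "k \<in> J" shows "j + a powi m * k \<in> J"
  using monoid.m_closed[OF group.is_monoid[OF assms(1)], of "(j, m)" "(k, 0)"] assms(2,3)
  by (simp add: sdp_carrier)

context
  fixes a b :: real and J K :: "real set" and \<Phi> :: "real \<times> int \<Rightarrow> real \<times> int"
  assumes G: "group (sdp a J)" and H: "group (sdp b K)"
    and fibre_J: "conj_commuting (sdp a J) = J \<times> {0}"
    and fibre_K: "conj_commuting (sdp b K) = K \<times> {0}"
    and \<Phi>: "\<Phi> \<in> iso (sdp a J) (sdp b K)"
begin

private lemma \<Phi>_mult:
  "x \<in> carrier (sdp a J) \<Longrightarrow> y \<in> carrier (sdp a J) \<Longrightarrow>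
     \<Phi> (x \<otimes>\<^bsub>sdp a J\<^esub> y) = \<Phi> x \<otimes>\<^bsub>sdp b K\<^esub> \<Phi> y"
  using \<Phi> unfolding iso_def hom_def by blast

lemma sdp_iso_fibre: "\<Phi> ` (J \<times> {0}) = K \<times> {0}"
  using iso_image_conj_commuting[OF G H \<Phi>] fibre_J fibre_K by simp

lemma sdp_iso_fibre_mem:
  assumes "j \<in> J" shows "snd (\<Phi> (j, 0)) = 0" and "fst (\<Phi> (j, 0)) \<in> K"
proof -
  have "\<Phi> (j, 0) \<in> K \<times> {0}" using sdp_iso_fibre assms by blast
  thus "snd (\<Phi> (j, 0)) = 0" "fst (\<Phi> (j, 0)) \<in> K" by auto
qed

lemma sdp_iso_fibre_eq: "j \<in> J \<Longrightarrow> \<exists>k. \<Phi> (j, 0) = (k, 0)"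
  using sdp_iso_fibre_mem(1) by (intro exI[of _ "fst (\<Phi> (j, 0))"]) (simp add: prod_eq_iff)

lemma bij_betw_sdp_iso_fibre: "bij_betw (\<lambda>j. fst (\<Phi> (j, 0))) J K"
  unfolding bij_betw_def
proof
  have inj: "inj_on \<Phi> (carrier (sdp a J))" using \<Phi> unfolding iso_def bij_betw_def by blast
  show "inj_on (\<lambda>j. fst (\<Phi> (j, 0))) J"
  proof (rule inj_onI)
    fix x y assume x: "x \<in> J" and y: "y \<in> J" and "fst (\<Phi> (x, 0)) = fst (\<Phi> (y, 0))"
    hence "\<Phi> (x, 0) = \<Phi> (y, 0)" using sdp_iso_fibre_mem(1) by (simp add: prod_eq_iff)
    hence "(x, 0) = (y, 0::int)" by (rule inj_onD[OF inj]) (use x y in \<open>simp_all add: sdp_carrier\<close>)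
    thus "x = y" by simp
  qed
  show "(\<lambda>j. fst (\<Phi> (j, 0))) ` J = K"
  proof (intro equalityI subsetI)
    fix k assume "k \<in> K"
    hence "(k, 0) \<in> \<Phi> ` (J \<times> {0})" using sdp_iso_fibre by simp
    then obtain j where j: "j \<in> J" "\<Phi> (j, 0) = (k, 0)" by auto
    hence "fst (\<Phi> (j, 0)) = k" by simp
    thus "k \<in> (\<lambda>j. fst (\<Phi> (j, 0))) ` J" using j(1) by blast
  qed (use sdp_iso_fibre_mem(2) in blast)
qed

lemma sdp_iso_fibre_add:
  assumes x: "x \<in> J" and y: "y \<in> J"
  shows "fst (\<Phi> (x + y, 0)) = fst (\<Phi> (x, 0)) + fst (\<Phi> (y, 0))"
proof -
  obtain k l where k: "\<Phi> (x, 0) = (k, 0)" and l: "\<Phi> (y, 0) = (l, 0)"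
    using sdp_iso_fibre_eq[OF x] sdp_iso_fibre_eq[OF y] by blast
  have "\<Phi> ((x, 0) \<otimes>\<^bsub>sdp a J\<^esub> (y, 0)) = \<Phi> (x, 0) \<otimes>\<^bsub>sdp b K\<^esub> \<Phi> (y, 0)"
    using \<Phi>_mult[of "(x, 0)" "(y, 0)"] x y by (simp add: sdp_carrier)
  thus ?thesis by (simp add: k l)
qed

lemma sdp_iso_snd: "snd (\<Phi> (0, m)) = m * snd (\<Phi> (0, 1))"
proof (induction m rule: int_induct[where k = 0])
  case base
  show ?case using sdp_iso_fibre_mem(1)[OF sdp_zero_mem[OF G]] by simp
next
  case (step1 i)
  have "\<Phi> (0, i + 1) = \<Phi> (0, i) \<otimes>\<^bsub>sdp b K\<^esub> \<Phi> (0, 1)"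
    using \<Phi>_mult[of "(0, i)" "(0, 1)"] sdp_zero_mem[OF G] by (simp add: sdp_carrier)
  thus ?case using step1 by (cases "\<Phi> (0, i)", cases "\<Phi> (0, 1)") (simp add: algebra_simps)
next
  case (step2 i)
  have "\<Phi> (0, i) = \<Phi> (0, i - 1) \<otimes>\<^bsub>sdp b K\<^esub> \<Phi> (0, 1)"
    using \<Phi>_mult[of "(0, i - 1)" "(0, 1)"] sdp_zero_mem[OF G] by (simp add: sdp_carrier)
  thus ?case using step2 by (cases "\<Phi> (0, i - 1)", cases "\<Phi> (0, 1)") (simp add: algebra_simps)
qed

lemma sdp_iso_snd_unit: "snd (\<Phi> (0, 1)) = 1 \<or> snd (\<Phi> (0, 1)) = -1"
proof -
  have "\<Phi> ` carrier (sdp a J) = carrier (sdp b K)" using \<Phi> by (simp add: iso_def bij_betw_def)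
  hence "(0, 1) \<in> \<Phi> ` (J \<times> UNIV)" using sdp_zero_mem[OF H] by (simp add: sdp_carrier)
  then obtain j m where j: "j \<in> J" and jm: "\<Phi> (j, m) = (0, 1)" by auto
  obtain k where k: "\<Phi> (j, 0) = (k, 0)" using sdp_iso_fibre_eq[OF j] by blast
  have "\<Phi> (j, m) = \<Phi> ((j, 0) \<otimes>\<^bsub>sdp a J\<^esub> (0, m))" by simp
  also have "\<dots> = (k, 0) \<otimes>\<^bsub>sdp b K\<^esub> \<Phi> (0, m)"
    using \<Phi>_mult[of "(j, 0)" "(0, m)"] j sdp_zero_mem[OF G] k by (simp add: sdp_carrier)
  finally have "snd (\<Phi> (0, m)) = 1" using jm by (cases "\<Phi> (0, m)") simp
  thus ?thesis using sdp_iso_snd[of m] zmult_eq_1_iff by auto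
qed

lemma sdp_iso_fibre_twist:
  assumes j: "j \<in> J"
  shows "fst (\<Phi> (a * j, 0)) = b powi snd (\<Phi> (0, 1)) * fst (\<Phi> (j, 0))"
proof -
  have aj: "a * j \<in> J" using sdp_closed[OF G sdp_zero_mem[OF G] j, of 1] by simp
  obtain k l where k: "\<Phi> (j, 0) = (k, 0)" and l: "\<Phi> (a * j, 0) = (l, 0)"
    using sdp_iso_fibre_eq[OF j] sdp_iso_fibre_eq[OF aj] by blast
  obtain c e where ce: "\<Phi> (0, 1) = (c, e)" by fastforce
  have "(0, 1) \<otimes>\<^bsub>sdp a J\<^esub> (j, 0) = (a * j, 0) \<otimes>\<^bsub>sdp a J\<^esub> (0, 1)" by simp
  hence "\<Phi> (0, 1) \<otimes>\<^bsub>sdp b K\<^esub> \<Phi> (j, 0) = \<Phi> (a * j, 0) \<otimes>\<^bsub>sdp b K\<^esub> \<Phi> (0, 1)"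
    using \<Phi>_mult[of "(0, 1)" "(j, 0)"] \<Phi>_mult[of "(a * j, 0)" "(0, 1)"] j aj sdp_zero_mem[OF G]
    by (simp add: sdp_carrier)
  thus ?thesis by (simp add: k l ce)
qed

end

lemma sdp_iso_imp_twisted_bij:
  assumes "group (sdp a J)" "group (sdp b K)"
    "conj_commuting (sdp a J) = J \<times> {0}" "conj_commuting (sdp b K) = K \<times> {0}"
    "sdp a J \<cong> sdp b K"
  shows "\<exists>\<phi> e. bij_betw \<phi> J K \<and> (\<forall>x\<in>J. \<forall>y\<in>J. \<phi> (x + y) = \<phi> x + \<phi> y) \<and>
     (e = 1 \<or> e = -1) \<and> (\<forall>j\<in>J. \<phi> (a * j) = b powi e * \<phi> j)"
proof -
  obtain \<Phi> where \<Phi>: "\<Phi> \<in> iso (sdp a J) (sdp b K)" using assms(5) unfolding is_iso_def by auto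
  show ?thesis
  proof (intro exI[of _ "\<lambda>j. fst (\<Phi> (j, 0))"] exI[of _ "snd (\<Phi> (0, 1))"] conjI ballI)
    show "bij_betw (\<lambda>j. fst (\<Phi> (j, 0))) J K" by (rule bij_betw_sdp_iso_fibre[OF assms(1-4) \<Phi>])
    show "snd (\<Phi> (0, 1)) = 1 \<or> snd (\<Phi> (0, 1)) = -1" by (rule sdp_iso_snd_unit[OF assms(1-4) \<Phi>])
    fix x y assume "x \<in> J" "y \<in> J"
    thus "fst (\<Phi> (x + y, 0)) = fst (\<Phi> (x, 0)) + fst (\<Phi> (y, 0))"
      by (rule sdp_iso_fibre_add[OF assms(1-4) \<Phi>])
  next
    fix j assume "j \<in> J"
    thus "fst (\<Phi> (a * j, 0)) = b powi snd (\<Phi> (0, 1)) * fst (\<Phi> (j, 0))"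
      by (rule sdp_iso_fibre_twist[OF assms(1-4) \<Phi>])
  qed
qed

section \<open>Classification of the groups\<close>

lemma additive_of_int_mult:
  fixes \<phi> :: "real \<Rightarrow> real"
  assumes add: "\<forall>x\<in>J. \<forall>y\<in>J. \<phi> (x + y) = \<phi> x + \<phi> y"
    and closed: "\<forall>x\<in>J. \<forall>y\<in>J. x + y \<in> J" "0 \<in> J" "\<forall>x\<in>J. - x \<in> J"
    and y: "y \<in> J"
  shows "\<phi> (of_int k * y) = of_int k * \<phi> y"
proof -
  have "\<phi> (0 + 0) = \<phi> 0 + \<phi> 0" using add closed(2) by blast
  hence \<phi>0: "\<phi> 0 = 0" by simp
  have nat: "\<phi> (of_nat i * y) = of_nat i * \<phi> y \<and> of_nat i * y \<in> J" for i
  proof (induction i)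
    case (Suc i)
    have "of_nat (Suc i) * y = of_nat i * y + y" by (simp add: algebra_simps)
    thus ?case using Suc add closed(1) y by (simp add: algebra_simps)
  qed (simp add: \<phi>0 closed(2))
  have neg: "\<phi> (- x) = - \<phi> x" if "x \<in> J" for x
  proof -
    have "\<phi> (x + - x) = \<phi> x + \<phi> (- x)" using add closed(3) that by blast
    thus ?thesis using \<phi>0 by simp
  qed
  show ?thesis
    using nat[of "nat k"] nat[of "nat (- k)"] neg[of "of_nat (nat (- k)) * y"]
    by (cases "k \<ge> 0") simp_all
qed

context real_quadratic_unit
begin

lemma additive_Zring_linear:
  fixes \<phi> :: "real \<Rightarrow> real"
  assumes J: "is_ideal a J" and add: "\<forall>x\<in>J. \<forall>y\<in>J. \<phi> (x + y) = \<phi> x + \<phi> y"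
    and twist: "\<forall>j\<in>J. \<phi> (a * j) = c * \<phi> j" and y: "y \<in> J"
  shows "\<phi> ((of_int p + of_int q * a) * y) = (of_int p + of_int q * c) * \<phi> y"
proof -
  have lin: "\<phi> (of_int k * x) = of_int k * \<phi> x" if "x \<in> J" for k x
    using additive_of_int_mult[OF add] ideal_add[OF J] ideal_zero[OF J] ideal_neg[OF J] that by blast
  have ay: "a * y \<in> J" using ideal_mult[OF J Zring_a y] .
  have "(of_int p + of_int q * a) * y = of_int p * y + of_int q * (a * y)" by (simp add: algebra_simps)
  hence "\<phi> ((of_int p + of_int q * a) * y) = \<phi> (of_int p * y) + \<phi> (of_int q * (a * y))"
    using add ideal_of_int_mult[OF J y] ideal_of_int_mult[OF J ay] by simp
  also have "\<dots> = of_int p * \<phi> y + of_int q * (c * \<phi> y)" using lin y ay twist by simp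
  finally show ?thesis by (simp add: algebra_simps)
qed

text \<open>Applying the twist twice shows that \<open>c\<close> satisfies the minimal polynomial of \<open>a\<close>.\<close>
lemma twist_factor_is_conjugate:
  fixes \<phi> :: "real \<Rightarrow> real"
  assumes J: "nonzero_ideal a J" and inj: "inj_on \<phi> J"
    and add: "\<forall>x\<in>J. \<forall>y\<in>J. \<phi> (x + y) = \<phi> x + \<phi> y"
    and twist: "\<forall>j\<in>J. \<phi> (a * j) = c * \<phi> j"
  shows "c = a \<or> c = a_conj"
proof -
  obtain x where I: "is_ideal a J" and x: "x \<in> J" "x \<noteq> 0" using J by (rule nonzero_idealE)
  have "\<phi> (0 + 0) = \<phi> 0 + \<phi> 0" using add ideal_zero[OF I] by blast
  hence "\<phi> 0 = 0" by simp
  hence \<phi>x: "\<phi> x \<noteq> 0" using inj_onD[OF inj _ x(1) ideal_zero[OF I]] x(2) by auto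
  have ax: "a * x \<in> J" using ideal_mult[OF I Zring_a x(1)] .
  have "a * (a * x) = (of_int (-n) + of_int t * a) * x"
    by (simp only: mult.assoc[symmetric] a_squared) (simp add: algebra_simps)
  hence "\<phi> (a * (a * x)) = (of_int (-n) + of_int t * c) * \<phi> x"
    using additive_Zring_linear[OF I add twist x(1), of "-n" t] by (simp only:)
  moreover have "\<phi> (a * (a * x)) = c * (c * \<phi> x)" using twist ax x by simp
  ultimately have "(c * c - (of_int (-n) + of_int t * c)) * \<phi> x = 0" by (simp add: algebra_simps)
  hence "c * c = of_int (-n) + of_int t * c" using \<phi>x by simp
  moreover have "(c - a) * (c - a_conj) = c * c - (a + a_conj) * c + a * a_conj"
    by (simp add: algebra_simps)
  ultimately have "(c - a) * (c - a_conj) = 0" unfolding a_plus_a_conj a_times_a_conj by simp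
  thus ?thesis by simp
qed

lemma same_class_of_twisted_bij:
  fixes \<phi> :: "real \<Rightarrow> real"
  assumes J: "is_ideal a J" and bij: "bij_betw \<phi> J K"
    and add: "\<forall>x\<in>J. \<forall>y\<in>J. \<phi> (x + y) = \<phi> x + \<phi> y"
    and twist: "\<forall>j\<in>J. \<phi> (a * j) = a * \<phi> j"
  shows "same_class a K J"
  unfolding same_class_def
proof (intro exI[of _ "inv_into J \<phi>"] conjI ballI)
  show "bij_betw (inv_into J \<phi>) K J" using bij by (rule bij_betw_inv_into)
  have inj: "inj_on \<phi> J" and im: "\<phi> ` J = K" using bij unfolding bij_betw_def by auto
  fix x y assume "x \<in> K" "y \<in> K"
  then obtain j j' where j: "j \<in> J" "x = \<phi> j" and j': "j' \<in> J" "y = \<phi> j'" using im by auto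
  hence "x + y = \<phi> (j + j')" using add by simp
  thus "inv_into J \<phi> (x + y) = inv_into J \<phi> x + inv_into J \<phi> y"
    using inv_into_f_f[OF inj] j j' ideal_add[OF J] by simp
next
  have inj: "inj_on \<phi> J" and im: "\<phi> ` J = K" using bij unfolding bij_betw_def by auto
  fix r x assume r: "r \<in> Zring a" and "x \<in> K"
  then obtain j where j: "j \<in> J" "x = \<phi> j" using im by auto
  obtain p q where "r = of_int p + of_int q * a" using r by (rule ZringE)
  hence "\<phi> (r * j) = r * \<phi> j" using additive_Zring_linear[OF J add twist j(1)] by simp
  thus "inv_into J \<phi> (r * x) = r * inv_into J \<phi> x"
    using inv_into_f_f[OF inj] j ideal_mult[OF J r j(1)] by metis
qed

lemma same_class_gal_of_twisted_bij:
  fixes \<phi> :: "real \<Rightarrow> real"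
  assumes J: "is_ideal a J" and bij: "bij_betw \<phi> J K"
    and add: "\<forall>x\<in>J. \<forall>y\<in>J. \<phi> (x + y) = \<phi> x + \<phi> y"
    and twist: "\<forall>j\<in>J. \<phi> (a * j) = a_conj * \<phi> j"
  shows "same_class a K (gal a ` J)"
  unfolding same_class_def
proof (intro exI[of _ "gal a \<circ> inv_into J \<phi>"] conjI ballI)
  have JZ: "J \<subseteq> Zring a" using ideal_subset[OF J] .
  have "bij_betw (gal a) J (gal a ` J)" using inj_on_subset[OF inj_on_gal JZ] by (rule inj_on_imp_bij_betw)
  thus "bij_betw (gal a \<circ> inv_into J \<phi>) K (gal a ` J)"
    using bij by (metis bij_betw_inv_into bij_betw_trans)
  have inj: "inj_on \<phi> J" and im: "\<phi> ` J = K" using bij unfolding bij_betw_def by auto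
  fix x y assume "x \<in> K" "y \<in> K"
  then obtain j j' where j: "j \<in> J" "x = \<phi> j" and j': "j' \<in> J" "y = \<phi> j'" using im by auto
  hence "x + y = \<phi> (j + j')" using add by simp
  thus "(gal a \<circ> inv_into J \<phi>) (x + y) = (gal a \<circ> inv_into J \<phi>) x + (gal a \<circ> inv_into J \<phi>) y"
    using inv_into_f_f[OF inj] j j' ideal_add[OF J] gal_add[of j j'] JZ by auto
next
  have JZ: "J \<subseteq> Zring a" using ideal_subset[OF J] .
  have inj: "inj_on \<phi> J" and im: "\<phi> ` J = K" using bij unfolding bij_betw_def by auto
  fix r x assume r: "r \<in> Zring a" and "x \<in> K"
  then obtain j where j: "j \<in> J" "x = \<phi> j" using im by auto
  have gr: "gal a r \<in> Zring a" using gal_Zring[OF r] .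
  then obtain p q where pq: "gal a r = of_int p + of_int q * a" by (rule ZringE)
  have "of_int p + of_int q * a_conj = r" using pq gal_coords gal_gal[OF r] by metis
  hence "\<phi> (gal a r * j) = r * x"
    using additive_Zring_linear[OF J add twist j(1), of p q] pq j(2) by simp
  hence "inv_into J \<phi> (r * x) = gal a r * j" using inv_into_f_f[OF inj ideal_mult[OF J gr j(1)]] by simp
  thus "(gal a \<circ> inv_into J \<phi>) (r * x) = r * (gal a \<circ> inv_into J \<phi>) x"
    using inv_into_f_f[OF inj j(1)] j gal_mult[OF gr] JZ gal_gal[OF r] by auto
qed

lemma sdp_iso_of_same_class:
  assumes K: "\<forall>m. \<forall>k\<in>K. b powi m * k \<in> K"
    and same: "same_class a K J" and b: "b = a powi e" and e: "e = 1 \<or> e = -1"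
  shows "sdp b K \<cong> sdp a J"
proof -
  obtain f where f: "bij_betw f K J" "\<forall>x\<in>K. \<forall>y\<in>K. f (x + y) = f x + f y"
    "\<forall>r\<in>Zring a. \<forall>x\<in>K. f (r * x) = r * f x" using same unfolding same_class_def by blast
  have "b powi m = a powi (e * m)" for m by (simp add: b power_int_mult)
  hence "\<forall>m. \<forall>k\<in>K. f (b powi m * k) = a powi (e * m) * f k" using f(3) Zring_powi by simp
  thus ?thesis by (rule is_isoI[OF sdp_iso_of_equivariant_bij[OF f(1,2) e _ K]])
qed

lemma sdp_iso_of_same_class_gal:
  assumes J: "is_ideal a J" and K: "\<forall>m. \<forall>k\<in>K. b powi m * k \<in> K"
    and same: "same_class a K (gal a ` J)" and b: "b = a_conj powi e" and e: "e = 1 \<or> e = -1"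
  shows "sdp b K \<cong> sdp a J"
proof -
  obtain f where f: "bij_betw f K (gal a ` J)" "\<forall>x\<in>K. \<forall>y\<in>K. f (x + y) = f x + f y"
    "\<forall>r\<in>Zring a. \<forall>x\<in>K. f (r * x) = r * f x" using same unfolding same_class_def by blast
  have JZ: "J \<subseteq> Zring a" using ideal_subset[OF J] .
  have fK: "f k \<in> Zring a" if "k \<in> K" for k
  proof -
    have "f k \<in> gal a ` J" using bij_betwE[OF f(1)] that by blast
    then obtain j where "j \<in> J" "f k = gal a j" by blast
    thus ?thesis using JZ gal_Zring by auto
  qed
  have "gal a ` gal a ` J = (\<lambda>x. x) ` J"
    unfolding image_image using gal_gal JZ by (intro image_cong) auto
  hence gal_gal_J: "gal a ` gal a ` J = J" by simp
  have "gal a ` J \<subseteq> Zring a" using JZ gal_Zring by blast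
  hence "bij_betw (gal a) (gal a ` J) J"
    using inj_on_imp_bij_betw[OF inj_on_subset[OF inj_on_gal]] gal_gal_J by metis
  hence "bij_betw (gal a \<circ> f) K J" using f(1) bij_betw_trans by blast
  moreover have "\<forall>x\<in>K. \<forall>y\<in>K. (gal a \<circ> f) (x + y) = (gal a \<circ> f) x + (gal a \<circ> f) y"
    using f(2) gal_add fK by simp
  moreover have "\<forall>m. \<forall>k\<in>K. (gal a \<circ> f) (b powi m * k) = a powi (e * m) * (gal a \<circ> f) k"
  proof (intro allI ballI)
    fix m k assume k: "k \<in> K"
    have "b powi m = a_conj powi (e * m)" by (simp add: b power_int_mult)
    thus "(gal a \<circ> f) (b powi m * k) = a powi (e * m) * (gal a \<circ> f) k"
      using f(3) Zring_a_conj_powi gal_mult[OF Zring_a_conj_powi fK[OF k]] gal_a_conj_powi k by simp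
  qed
  ultimately show ?thesis by (intro is_isoI) (rule sdp_iso_of_equivariant_bij[OF _ _ e _ K])
qed

lemma sdp_iso_iff:
  assumes b: "real_quadratic_unit b t' n'" and J: "nonzero_ideal a J" and K: "nonzero_ideal b K"
  shows "sdp a J \<cong> sdp b K \<longleftrightarrow>
    ((b = a \<or> b = inverse a) \<and> same_class a K J) \<or>
    ((b = gconj a \<or> b = inverse (gconj a)) \<and> same_class a K (gal a ` J))"
proof
  interpret B: real_quadratic_unit b t' n' by (rule b)
  have IJ: "is_ideal a J" and IK: "is_ideal b K" using J K unfolding nonzero_ideal_def by auto
  assume "sdp a J \<cong> sdp b K"
  then obtain \<phi> e where \<phi>: "bij_betw \<phi> J K" "\<forall>x\<in>J. \<forall>y\<in>J. \<phi> (x + y) = \<phi> x + \<phi> y"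
     and e: "e = 1 \<or> e = -1" and twist: "\<forall>j\<in>J. \<phi> (a * j) = b powi e * \<phi> j"
    using sdp_iso_imp_twisted_bij[OF group_sdp[OF IJ] B.group_sdp[OF IK]
        conj_commuting_sdp[OF J] B.conj_commuting_sdp[OF K]] by blast
  have "b = b powi e \<or> b = inverse (b powi e)" using e by (auto simp: power_int_minus)
  moreover have "b powi e = a \<or> b powi e = a_conj"
    using twist_factor_is_conjugate[OF J _ \<phi>(2) twist] \<phi>(1) unfolding bij_betw_def by blast
  ultimately show "((b = a \<or> b = inverse a) \<and> same_class a K J) \<or>
    ((b = gconj a \<or> b = inverse (gconj a)) \<and> same_class a K (gal a ` J))"
    using same_class_of_twisted_bij[OF IJ \<phi>] same_class_gal_of_twisted_bij[OF IJ \<phi>] twist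
    unfolding gconj_eq by auto
next
  interpret B: real_quadratic_unit b t' n' by (rule b)
  have IJ: "is_ideal a J" and IK: "is_ideal b K" using J K unfolding nonzero_ideal_def by auto
  have closed: "\<forall>m. \<forall>k\<in>K. b powi m * k \<in> K" using B.ideal_powi_mult[OF IK] by blast
  assume "((b = a \<or> b = inverse a) \<and> same_class a K J) \<or>
    ((b = gconj a \<or> b = inverse (gconj a)) \<and> same_class a K (gal a ` J))"
  hence "sdp b K \<cong> sdp a J"
    unfolding gconj_eq
    using sdp_iso_of_same_class[OF closed, of J 1] sdp_iso_of_same_class[OF closed, of J "-1"]
      sdp_iso_of_same_class_gal[OF IJ closed, of 1] sdp_iso_of_same_class_gal[OF IJ closed, of "-1"]
    by (auto simp: power_int_minus)
  thus "sdp a J \<cong> sdp b K" by (rule group.iso_sym[OF B.group_sdp[OF IK]])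
qed

end

section \<open>Finiteness of the number of classes\<close>

lemma int_subgroup_principal:
  fixes S :: "int set"
  assumes diff: "\<forall>x\<in>S. \<forall>y\<in>S. x - y \<in> S" and N: "N \<in> S" "N \<noteq> 0"
  shows "\<exists>w>0. w \<in> S \<and> (\<forall>q\<in>S. w dvd q)"
proof -
  have zero: "0 \<in> S" using diff N by (metis diff_self)
  have neg: "- x \<in> S" if "x \<in> S" for x using diff zero that by (metis diff_0)
  have nat_mult: "int k * x \<in> S" if "x \<in> S" for k x
    by (induction k) (use zero diff neg that in \<open>simp_all add: algebra_simps, metis diff_minus_eq_add\<close>)
  have mult: "k * x \<in> S" if "x \<in> S" for k x
    using nat_mult[OF that, of "nat k"] neg[OF nat_mult[OF that, of "nat (-k)"]] by (cases "k \<ge> 0") simp_all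
  define P where "P = {k::nat. k > 0 \<and> int k \<in> S}"
  have "nat \<bar>N\<bar> \<in> P" unfolding P_def using N neg by (cases "N \<ge> 0") auto
  hence LP: "(LEAST k. k \<in> P) \<in> P" by (rule LeastI)
  define w where "w = int (LEAST k. k \<in> P)"
  have w: "w > 0" "w \<in> S" using LP unfolding w_def P_def by auto
  have "w dvd q" if q: "q \<in> S" for q
  proof (rule ccontr)
    assume "\<not> w dvd q"
    hence "q mod w \<noteq> 0" by (simp add: dvd_eq_mod_eq_0)
    moreover have "q mod w \<in> S" using diff q mult[OF w(2)] by (simp add: minus_div_mult_eq_mod[symmetric])
    moreover have "q mod w \<ge> 0" "q mod w < w" using w(1) by simp_all
    ultimately have "nat (q mod w) \<in> P" "nat (q mod w) < (LEAST k. k \<in> P)"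
      unfolding P_def w_def by auto
    thus False using not_less_Least by blast
  qed
  thus ?thesis using w by blast
qed

text \<open>The lattice \<open>u\<int> + (v + a)\<int>\<close>; up to scaling, every ideal is of this form
  (Hermite normal form).\<close>
definition hnf_lattice :: "real \<Rightarrow> int \<Rightarrow> int \<Rightarrow> real set" where
  "hnf_lattice a u v = {of_int p * of_int u + of_int q * (of_int v + a) | p q. True}"

lemma hnf_lattice_shift: "hnf_lattice a u (v + k * u) = hnf_lattice a u v"
proof (intro equalityI subsetI)
  fix x assume "x \<in> hnf_lattice a u (v + k * u)"
  then obtain p q where "x = of_int p * of_int u + of_int q * (of_int (v + k * u) + a)"
    unfolding hnf_lattice_def by blast
  hence "x = of_int (p + q * k) * of_int u + of_int q * (of_int v + a)" by (simp add: algebra_simps)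
  thus "x \<in> hnf_lattice a u v" unfolding hnf_lattice_def by blast
next
  fix x assume "x \<in> hnf_lattice a u v"
  then obtain p q where "x = of_int p * of_int u + of_int q * (of_int v + a)"
    unfolding hnf_lattice_def by blast
  hence "x = of_int (p - q * k) * of_int u + of_int q * (of_int (v + k * u) + a)"
    by (simp add: algebra_simps)
  thus "x \<in> hnf_lattice a u (v + k * u)" unfolding hnf_lattice_def by blast
qed

lemma hnf_lattice_uminus: "hnf_lattice a (- u) v = hnf_lattice a u v"
proof -
  have "of_int p * of_int (- u) = of_int (- p) * (of_int u :: real)" for p by simp
  hence "\<exists>p'. of_int p * of_int (- u) = of_int p' * (of_int u :: real)"
    "\<exists>p'. of_int p * of_int u = of_int p' * (of_int (- u) :: real)" for p
    by (metis minus_mult_minus of_int_minus)+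
  thus ?thesis unfolding hnf_lattice_def by (metis (no_types, opaque_lifting))
qed

lemma image_mult_image_mult: "(*) (l::real) ` ((*) m ` S) = (*) (l * m) ` S"
  by (simp add: image_image mult.assoc)

context real_quadratic_unit
begin

lemma hnf_lattice_subset_Zring: "hnf_lattice a u v \<subseteq> Zring a"
proof
  fix x assume "x \<in> hnf_lattice a u v"
  then obtain p q where "x = of_int p * of_int u + of_int q * (of_int v + a)"
    unfolding hnf_lattice_def by blast
  hence "x = of_int (p * u + q * v) + of_int q * a" by (simp add: algebra_simps)
  thus "x \<in> Zring a" by (simp only: ZringI)
qed

lemma sdp_iso_scale:
  assumes J: "is_ideal a J" and l: "l \<noteq> 0"
  shows "sdp a J \<cong> sdp a ((*) l ` J)"
proof -
  have "(\<lambda>(k, m). ((*) l k, 1 * m)) \<in> iso (sdp a J) (sdp a ((*) l ` J))"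
  proof (rule sdp_iso_of_equivariant_bij)
    show "bij_betw ((*) l) J ((*) l ` J)" using l by (simp add: bij_betw_def inj_on_def)
    show "\<forall>m. \<forall>k\<in>J. l * (a powi m * k) = a powi (1 * m) * (l * k)" by simp
  qed (use ideal_powi_mult[OF J] in \<open>simp_all add: distrib_left\<close>)
  thus ?thesis by (rule is_isoI)
qed

lemma nonzero_ideal_scale:
  assumes J: "nonzero_ideal a J" and l: "l \<noteq> 0" and sub: "(*) l ` J \<subseteq> Zring a"
  shows "nonzero_ideal a ((*) l ` J)"
proof -
  obtain x where I: "is_ideal a J" and x: "x \<in> J" "x \<noteq> 0" using J by (rule nonzero_idealE)
  have "is_ideal a ((*) l ` J)" unfolding is_ideal_def
  proof (intro conjI ballI sub)
    show "0 \<in> (*) l ` J" using ideal_zero[OF I] by force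
  next
    fix x y assume "x \<in> (*) l ` J" "y \<in> (*) l ` J"
    then obtain j j' where "j \<in> J" "j' \<in> J" "x = l * j" "y = l * j'" by auto
    thus "x + y \<in> (*) l ` J"
      using ideal_add[OF I] by (intro image_eqI[of _ _ "j + j'"]) (auto simp: algebra_simps)
  next
    fix x assume "x \<in> (*) l ` J"
    then obtain j where "j \<in> J" "x = l * j" by auto
    thus "- x \<in> (*) l ` J" using ideal_neg[OF I] by (intro image_eqI[of _ _ "- j"]) auto
  next
    fix r x assume r: "r \<in> Zring a" and "x \<in> (*) l ` J"
    then obtain j where "j \<in> J" "x = l * j" by auto
    moreover have "r * (l * j) = l * (r * j)" by (simp add: mult.left_commute)
    ultimately show "r * x \<in> (*) l ` J" using ideal_mult[OF I r] by blast
  qed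
  moreover have "(*) l ` J \<noteq> {0}" using x l by (metis imageI mult_eq_0_iff singletonD)
  ultimately show ?thesis unfolding nonzero_ideal_def by simp
qed

lemma hnf_lattice_ideal_dvd:
  assumes "is_ideal a (hnf_lattice a u v)" shows "u dvd (v * v + t * v + n)"
proof -
  have "of_int v + a \<in> hnf_lattice a u v"
    unfolding hnf_lattice_def by (intro CollectI exI[of _ 0] exI[of _ 1]) simp
  hence "a * (of_int v + a) \<in> hnf_lattice a u v" using ideal_mult[OF assms Zring_a] by blast
  then obtain p q where pq: "a * (of_int v + a) = of_int p * of_int u + of_int q * (of_int v + a)"
    unfolding hnf_lattice_def by blast
  have "a * (of_int v + a) = of_int (- n) + of_int (v + t) * a"
    using a_squared by (simp add: algebra_simps)
  hence "of_int (- n) + of_int (v + t) * a = of_int (p * u + q * v) + of_int q * a"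
    using pq by (simp add: algebra_simps)
  hence "- n = p * u + q * v" "q = v + t" using coords_unique by metis+
  hence "v * v + t * v + n = u * (- p)" by (simp add: algebra_simps)
  thus ?thesis by simp
qed

text \<open>Since \<open>(v + a)(v + a\<^sup>c) = u s\<close>, multiplication by \<open>(v + a\<^sup>c)/u\<close> sends
  \<open>v + a\<close> to \<open>s\<close> and \<open>u\<close> to \<open>v + a\<^sup>c = -((-v - t) + a)\<close>.\<close>
lemma hnf_lattice_conj:
  assumes u: "u \<noteq> 0" and s: "v * v + t * v + n = u * s"
  shows "hnf_lattice a s (- v - t) = (*) ((of_int v + a_conj) / of_int u) ` hnf_lattice a u v"
proof -
  have "(of_int v + a) * (of_int v + a_conj) = of_int v * of_int v + (a + a_conj) * of_int v + a * a_conj"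
    by (simp add: algebra_simps)
  hence norm: "(of_int v + a) * (of_int v + a_conj) = of_int u * of_int s"
    unfolding a_plus_a_conj a_times_a_conj using arg_cong[OF s, of real_of_int] by simp
  have key: "(of_int v + a_conj) / of_int u * (of_int p * of_int u + of_int q * (of_int v + a))
     = of_int q * of_int s + of_int (- p) * (of_int (- v - t) + a)" for p q
  proof -
    have "(of_int v + a_conj) / of_int u * (of_int p * of_int u + of_int q * (of_int v + a))
       = of_int p * (of_int v + a_conj) + of_int q * ((of_int v + a) * (of_int v + a_conj)) / of_int u"
      using u by (simp add: field_simps)
    also have "\<dots> = of_int p * (of_int v + a_conj) + of_int q * of_int s" unfolding norm using u by simp
    finally show ?thesis unfolding a_conj_def by (simp add: algebra_simps)
  qed
  show ?thesis
  proof (intro equalityI subsetI)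
    fix x assume "x \<in> hnf_lattice a s (- v - t)"
    then obtain p q where "x = of_int p * of_int s + of_int q * (of_int (- v - t) + a)"
      unfolding hnf_lattice_def by blast
    hence "x = (of_int v + a_conj) / of_int u * (of_int (- q) * of_int u + of_int p * (of_int v + a))"
      unfolding key by simp
    moreover have "of_int (- q) * of_int u + of_int p * (of_int v + a) \<in> hnf_lattice a u v"
      unfolding hnf_lattice_def by blast
    ultimately show "x \<in> (*) ((of_int v + a_conj) / of_int u) ` hnf_lattice a u v" by blast
  next
    fix x assume "x \<in> (*) ((of_int v + a_conj) / of_int u) ` hnf_lattice a u v"
    then obtain p q where "x = (of_int v + a_conj) / of_int u * (of_int p * of_int u + of_int q * (of_int v + a))"
      unfolding hnf_lattice_def by blast
    thus "x \<in> hnf_lattice a s (- v - t)" unfolding key hnf_lattice_def by blast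
  qed
qed

lemma ideal_contains_nonzero_int:
  assumes J: "nonzero_ideal a J" shows "\<exists>N. N \<noteq> 0 \<and> of_int N \<in> J"
proof -
  obtain x where I: "is_ideal a J" and x: "x \<in> J" "x \<noteq> 0" using J by (rule nonzero_idealE)
  have xZ: "x \<in> Zring a" using ideal_subset[OF I] x(1) by blast
  then obtain p q where xpq: "x = of_int p + of_int q * a" by (rule ZringE)
  have "x * gal a x = of_int p * of_int p + of_int p * of_int q * (a + a_conj) + of_int q * of_int q * (a * a_conj)"
    unfolding xpq gal_coords by (simp add: algebra_simps)
  hence "x * gal a x = of_int (p * p + p * q * t + q * q * n)"
    unfolding a_plus_a_conj a_times_a_conj by simp
  moreover have "x * gal a x \<in> J" using ideal_mult[OF I gal_Zring[OF xZ] x(1)] by (simp add: mult.commute)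
  moreover have "x * gal a x \<noteq> 0" using x(2) gal_nonzero[OF xZ x(2)] by simp
  ultimately show ?thesis by (metis of_int_0)
qed

lemma ideal_eq_scaled_hnf_lattice:
  assumes I: "is_ideal a J"
    and u: "of_int (w * u) \<in> J" "\<And>p. of_int p \<in> J \<Longrightarrow> w * u dvd p"
    and v: "of_int (w * v) + of_int w * a \<in> J" "\<And>p q. of_int p + of_int q * a \<in> J \<Longrightarrow> w dvd q"
  shows "J = (*) (of_int w) ` hnf_lattice a u v"
proof (intro equalityI subsetI)
  fix y assume y: "y \<in> J"
  then obtain p q where ypq: "y = of_int p + of_int q * a"
    using ideal_subset[OF I] by (meson ZringE subsetD)
  then obtain k where k: "q = w * k" using v(2) y by blast
  have "y + - (of_int k * (of_int (w * v) + of_int w * a)) \<in> J"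
    using ideal_add[OF I y ideal_neg[OF I ideal_of_int_mult[OF I v(1)]]] .
  moreover have "y + - (of_int k * (of_int (w * v) + of_int w * a)) = of_int (p - k * (w * v))"
    unfolding ypq k by (simp add: algebra_simps)
  ultimately have "w * u dvd p - k * (w * v)" using u(2) by simp
  then obtain l where "p - k * (w * v) = w * u * l" by (rule dvdE)
  hence "p = w * u * l + k * (w * v)" by simp
  hence "of_int p = (of_int (w * u * l + k * (w * v)) :: real)" by (rule arg_cong)
  hence "y = of_int w * (of_int l * of_int u + of_int k * (of_int v + a))"
    unfolding ypq k by (simp add: algebra_simps)
  thus "y \<in> (*) (of_int w) ` hnf_lattice a u v" unfolding hnf_lattice_def by blast
next
  fix y assume "y \<in> (*) (of_int w) ` hnf_lattice a u v"
  then obtain p q where "y = of_int w * (of_int p * of_int u + of_int q * (of_int v + a))"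
    unfolding hnf_lattice_def by blast
  hence "y = of_int p * of_int (w * u) + of_int q * (of_int (w * v) + of_int w * a)"
    by (simp add: algebra_simps)
  thus "y \<in> J"
    using ideal_add[OF I ideal_of_int_mult[OF I u(1)] ideal_of_int_mult[OF I v(1)]] by simp
qed

definition ideal_ints :: "real set \<Rightarrow> int set" where
  "ideal_ints J = {p. of_int p \<in> J}"

definition ideal_a_coeffs :: "real set \<Rightarrow> int set" where
  "ideal_a_coeffs J = {q. \<exists>p. of_int p + of_int q * a \<in> J}"

lemma ideal_ints_diff: "is_ideal a J \<Longrightarrow> \<forall>x\<in>ideal_ints J. \<forall>y\<in>ideal_ints J. x - y \<in> ideal_ints J"
  unfolding ideal_ints_def using ideal_add ideal_neg by (metis diff_conv_add_uminus mem_Collect_eq of_int_diff)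

lemma ideal_a_coeffs_diff:
  assumes I: "is_ideal a J"
  shows "\<forall>x\<in>ideal_a_coeffs J. \<forall>y\<in>ideal_a_coeffs J. x - y \<in> ideal_a_coeffs J"
proof (intro ballI)
  fix q1 q2 assume "q1 \<in> ideal_a_coeffs J" "q2 \<in> ideal_a_coeffs J"
  then obtain p1 p2 where "of_int p1 + of_int q1 * a \<in> J" "of_int p2 + of_int q2 * a \<in> J"
    unfolding ideal_a_coeffs_def by blast
  hence "(of_int p1 + of_int q1 * a) + - (of_int p2 + of_int q2 * a) \<in> J"
    using ideal_add[OF I] ideal_neg[OF I] by blast
  hence "of_int (p1 - p2) + of_int (q1 - q2) * a \<in> J" by (simp add: algebra_simps)
  thus "q1 - q2 \<in> ideal_a_coeffs J" unfolding ideal_a_coeffs_def by blast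
qed

lemma ideal_ints_subset_a_coeffs:
  assumes I: "is_ideal a J" shows "ideal_ints J \<subseteq> ideal_a_coeffs J"
proof
  fix p assume "p \<in> ideal_ints J"
  hence "a * of_int p \<in> J" using ideal_mult[OF I Zring_a] unfolding ideal_ints_def by blast
  hence "of_int 0 + of_int p * a \<in> J" by (simp add: mult.commute)
  thus "p \<in> ideal_a_coeffs J" unfolding ideal_a_coeffs_def by blast
qed

text \<open>Generators of the two cyclic groups \<open>ideal_ints J = u\<^sub>0\<int>\<close> and
  \<open>ideal_a_coeffs J = w\<int>\<close> give the basis \<open>u\<^sub>0, v\<^sub>0 + w a\<close> of \<open>J\<close>.\<close>
lemma ideal_hnf:
  assumes J: "nonzero_ideal a J"
  shows "\<exists>w u v. w \<noteq> 0 \<and> u > 0 \<and> J = (*) (of_int w) ` hnf_lattice a u v"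
proof -
  have I: "is_ideal a J" using J unfolding nonzero_ideal_def by simp
  have W_U: "ideal_ints J \<subseteq> ideal_a_coeffs J" by (rule ideal_ints_subset_a_coeffs[OF I])
  obtain N where N: "N \<noteq> 0" "N \<in> ideal_ints J"
    using ideal_contains_nonzero_int[OF J] unfolding ideal_ints_def by blast
  obtain w where w: "w > 0" "w \<in> ideal_a_coeffs J" "\<forall>q\<in>ideal_a_coeffs J. w dvd q"
    using int_subgroup_principal[OF ideal_a_coeffs_diff[OF I] subsetD[OF W_U N(2)] N(1)] by blast
  obtain u0 where u0: "u0 > 0" "u0 \<in> ideal_ints J" "\<forall>p\<in>ideal_ints J. u0 dvd p"
    using int_subgroup_principal[OF ideal_ints_diff[OF I] N(2) N(1)] by blast
  obtain v0 where v0: "of_int v0 + of_int w * a \<in> J" using w(2) unfolding ideal_a_coeffs_def by blast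
  have "a * (of_int v0 + of_int w * a) = of_int v0 * a + of_int w * (a * a)"
    by (simp add: algebra_simps)
  also have "\<dots> = of_int (- n * w) + of_int (v0 + w * t) * a"
    unfolding a_squared by (simp add: algebra_simps)
  finally have "of_int (- n * w) + of_int (v0 + w * t) * a \<in> J" using ideal_mult[OF I Zring_a v0] by simp
  hence "w dvd v0 + w * t" using w(3) unfolding ideal_a_coeffs_def by blast
  hence "w dvd v0" by (simp add: dvd_add_left_iff)
  moreover have "w dvd u0" using w(3) W_U u0(2) by blast
  ultimately obtain u v where uv: "u0 = w * u" "v0 = w * v" by (meson dvdE)
  have "J = (*) (of_int w) ` hnf_lattice a u v"
    using u0 v0 w(3) uv
    by (intro ideal_eq_scaled_hnf_lattice[OF I]) (auto simp: ideal_ints_def ideal_a_coeffs_def)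
  moreover have "u > 0" using uv u0(1) w(1) by (simp add: zero_less_mult_iff)
  ultimately show ?thesis using w(1) by (intro exI[of _ w] exI[of _ u] exI[of _ v]) simp
qed

definition disc_bound :: int where "disc_bound = \<bar>t * t - 4 * n\<bar>"

lemma norm_bound:
  assumes "\<bar>2 * v + t\<bar> \<le> u"
  shows "\<bar>4 * (v * v + t * v + n)\<bar> \<le> u * u + disc_bound"
proof -
  have "4 * (v * v + t * v + n) = (2 * v + t) * (2 * v + t) - (t * t - 4 * n)" by (simp add: algebra_simps)
  moreover have "(2 * v + t) * (2 * v + t) \<le> u * u"
    using assms abs_le_square_iff[of "2 * v + t" u] by (simp add: power2_eq_square)
  ultimately show ?thesis unfolding disc_bound_def using zero_le_square[of "2 * v + t"] by linarith
qed

text \<open>One reduction step: shift \<open>v\<close> so that \<open>\<bar>2v + t\<bar> \<le> u\<close>, then pass to the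
  conjugate lattice, whose first generator is the cofactor \<open>s\<close> of the norm, \<open>\<bar>s\<bar> < u\<close>.\<close>
lemma hnf_lattice_reduce:
  assumes J: "nonzero_ideal a (hnf_lattice a u v)" and u: "disc_bound < u"
  shows "\<exists>s w l. 0 < s \<and> s < u \<and> l \<noteq> 0 \<and> hnf_lattice a s w = (*) l ` hnf_lattice a u v"
proof -
  have u0: "0 < u" using u unfolding disc_bound_def by linarith
  define v1 where "v1 = v - ((2 * v + t + u) div (2 * u)) * u"
  have shift: "hnf_lattice a u v1 = hnf_lattice a u v"
    unfolding v1_def using hnf_lattice_shift[of a u v "- ((2 * v + t + u) div (2 * u))"] by simp
  have "2 * v1 + t = (2 * v + t + u) mod (2 * u) - u"
    unfolding v1_def by (simp add: minus_div_mult_eq_mod[symmetric] algebra_simps)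
  moreover have "0 \<le> (2 * v + t + u) mod (2 * u)" "(2 * v + t + u) mod (2 * u) < 2 * u"
    using u0 by simp_all
  ultimately have bound: "\<bar>4 * (v1 * v1 + t * v1 + n)\<bar> \<le> u * u + disc_bound"
    by (intro norm_bound) linarith
  have "u dvd v1 * v1 + t * v1 + n"
    using hnf_lattice_ideal_dvd J shift unfolding nonzero_ideal_def by metis
  then obtain s where s: "v1 * v1 + t * v1 + n = u * s" by (rule dvdE)
  have nz: "of_int v1 + a \<noteq> 0" "of_int v1 + a_conj \<noteq> 0"
    using coords_zero[of v1 1] coords_conj_zero[of v1 1] by auto
  have "(of_int v1 + a) * (of_int v1 + a_conj) = of_int v1 * of_int v1 + (a + a_conj) * of_int v1 + a * a_conj"
    by (simp add: algebra_simps)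
  hence "(of_int v1 + a) * (of_int v1 + a_conj) = of_int (v1 * v1 + t * v1 + n)"
    unfolding a_plus_a_conj a_times_a_conj by simp
  hence "s \<noteq> 0" using s nz by (metis mult_eq_0_iff mult_zero_right of_int_0)
  have "u * (4 * \<bar>s\<bar>) = \<bar>4 * (v1 * v1 + t * v1 + n)\<bar>" using s u0 by (simp add: abs_mult)
  also have "\<dots> \<le> u * u + disc_bound" by (rule bound)
  also have "\<dots> < u * (2 * u)"
  proof -
    have "u * 1 \<le> u * u" using u0 by (intro mult_left_mono) auto
    thus ?thesis using u by (simp add: algebra_simps)
  qed
  finally have "u * (4 * \<bar>s\<bar>) < u * (2 * u)" .
  hence "0 < \<bar>s\<bar>" "\<bar>s\<bar> < u" using u0 \<open>s \<noteq> 0\<close> by (simp_all add: mult_less_cancel_left_pos)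
  moreover have "(of_int v1 + a_conj) / of_int u \<noteq> 0" using nz(2) u0 by simp
  moreover have "hnf_lattice a \<bar>s\<bar> (- v1 - t) = (*) ((of_int v1 + a_conj) / of_int u) ` hnf_lattice a u v"
    using hnf_lattice_conj[OF _ s] u0 shift hnf_lattice_uminus[of a s] by (simp add: abs_if)
  ultimately show ?thesis by blast
qed

lemma hnf_lattice_reduced:
  assumes "nonzero_ideal a (hnf_lattice a u v)" "0 < u"
  shows "\<exists>u' v' l. 0 < u' \<and> u' \<le> disc_bound \<and> 0 \<le> v' \<and> v' < u' \<and> l \<noteq> 0 \<and>
            hnf_lattice a u' v' = (*) l ` hnf_lattice a u v"
  using assms
proof (induction "nat u" arbitrary: u v rule: less_induct)
  case less
  show ?case
  proof (cases "u \<le> disc_bound")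
    case True
    have "hnf_lattice a u (v mod u) = (*) 1 ` hnf_lattice a u v"
      using hnf_lattice_shift[of a u v "- (v div u)"] by (simp add: minus_div_mult_eq_mod[symmetric])
    thus ?thesis using True less.prems(2)
      by (intro exI[of _ u] exI[of _ "v mod u"] exI[of _ 1]) simp
  next
    case False
    then obtain s w l where s: "0 < s" "s < u" and l: "l \<noteq> 0"
      and sw: "hnf_lattice a s w = (*) l ` hnf_lattice a u v"
      using hnf_lattice_reduce[OF less.prems(1)] by auto
    have "(*) l ` hnf_lattice a u v \<subseteq> Zring a" using hnf_lattice_subset_Zring[of s w] sw by simp
    hence "nonzero_ideal a (hnf_lattice a s w)" unfolding sw by (rule nonzero_ideal_scale[OF less.prems(1) l])
    then obtain u' v' l' where "0 < u'" "u' \<le> disc_bound" "0 \<le> v'" "v' < u'" "l' \<noteq> 0"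
      and u'v': "hnf_lattice a u' v' = (*) l' ` hnf_lattice a s w"
      using less.hyps[of s w] s by auto
    moreover have "hnf_lattice a u' v' = (*) (l' * l) ` hnf_lattice a u v"
      unfolding u'v' sw image_mult_image_mult ..
    ultimately show ?thesis using l by (intro exI[of _ u'] exI[of _ v'] exI[of _ "l' * l"]) simp
  qed
qed

lemma finite_sdp_classes:
  "\<exists>F. finite F \<and> (\<forall>J\<in>F. nonzero_ideal a J) \<and>
       (\<forall>J. nonzero_ideal a J \<longrightarrow> (\<exists>J'\<in>F. sdp a J \<cong> sdp a J'))"
proof -
  define F where "F = (\<lambda>(u, v). hnf_lattice a u v) `
    {(u, v). 0 < u \<and> u \<le> disc_bound \<and> 0 \<le> v \<and> v < u \<and> nonzero_ideal a (hnf_lattice a u v)}"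
  have "finite F" unfolding F_def
    by (rule finite_imageI, rule finite_subset[of _ "{0..disc_bound} \<times> {0..disc_bound}"]) auto
  moreover have "\<forall>J\<in>F. nonzero_ideal a J" unfolding F_def by auto
  moreover have "\<exists>J'\<in>F. sdp a J \<cong> sdp a J'" if J: "nonzero_ideal a J" for J
  proof -
    obtain w u v where wuv: "w \<noteq> 0" "u > 0" "J = (*) (of_int w) ` hnf_lattice a u v"
      using ideal_hnf[OF J] by blast
    have uv: "hnf_lattice a u v = (*) (1 / of_int w) ` J"
      using wuv(1) unfolding wuv(3) image_mult_image_mult by simp
    have sub: "(*) (1 / of_int w) ` J \<subseteq> Zring a" using hnf_lattice_subset_Zring[of u v] uv by simp
    have "nonzero_ideal a (hnf_lattice a u v)"
      unfolding uv by (rule nonzero_ideal_scale[OF J _ sub]) (simp add: wuv(1))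
    then obtain u' v' l where u'v': "0 < u'" "u' \<le> disc_bound" "0 \<le> v'" "v' < u'" "l \<noteq> 0"
      and J': "hnf_lattice a u' v' = (*) l ` hnf_lattice a u v"
      using hnf_lattice_reduced wuv(2) by blast
    have eq: "hnf_lattice a u' v' = (*) (l / of_int w) ` J"
      unfolding J' uv image_mult_image_mult by simp
    have lw: "l / of_int w \<noteq> 0" using u'v'(5) wuv(1) by simp
    have "(*) (l / of_int w) ` J \<subseteq> Zring a" using hnf_lattice_subset_Zring[of u' v'] eq by simp
    hence "nonzero_ideal a (hnf_lattice a u' v')" unfolding eq by (rule nonzero_ideal_scale[OF J lw])
    hence "hnf_lattice a u' v' \<in> F" unfolding F_def using u'v' by (intro image_eqI[of _ _ "(u', v')"]) auto
    moreover have "sdp a J \<cong> sdp a (hnf_lattice a u' v')"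
      unfolding eq using J lw by (intro sdp_iso_scale) (simp_all add: nonzero_ideal_def)
    ultimately show ?thesis by blast
  qed
  ultimately show ?thesis by blast
qed

end

section \<open>Realisation as a lattice in Sol\<close>

definition diag_scale :: "real \<Rightarrow> real \<Rightarrow> sol_pt \<Rightarrow> sol_pt" where
  "diag_scale A1 A2 p = (A1 * fst p, A2 * fst (snd p), snd (snd p))"

definition sol_affine :: "real \<Rightarrow> real \<Rightarrow> real \<Rightarrow> real \<Rightarrow> real \<Rightarrow> sol_pt \<Rightarrow> sol_pt" where
  "sol_affine A1 A2 c1 c2 d p = diag_scale A1 A2 p + (c1, c2, d)"

text \<open>The affine map \<open>(x, y, z) \<mapsto> (A\<^sub>1x + c\<^sub>1, A\<^sub>2y + c\<^sub>2, z + d)\<close> pulls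
  \<open>e\<^sup>2\<^sup>z dx\<^sup>2 + e\<^sup>-\<^sup>2\<^sup>z dy\<^sup>2\<close> back to \<open>A\<^sub>1\<^sup>2e\<^sup>2\<^sup>d e\<^sup>2\<^sup>z dx\<^sup>2 + A\<^sub>2\<^sup>2e\<^sup>-\<^sup>2\<^sup>d e\<^sup>-\<^sup>2\<^sup>z dy\<^sup>2\<close>.\<close>
definition sol_metric_preserving :: "real \<Rightarrow> real \<Rightarrow> real \<Rightarrow> bool" where
  "sol_metric_preserving A1 A2 d \<longleftrightarrow> A1\<^sup>2 * exp (2 * d) = 1 \<and> A2\<^sup>2 * exp (- 2 * d) = 1"

lemma sol_affine_apply [simp]:
  "sol_affine A1 A2 c1 c2 d (x, y, z) = (A1 * x + c1, A2 * y + c2, z + d)"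
  by (simp add: sol_affine_def diag_scale_def)

lemma bounded_linear_diag_scale: "bounded_linear (diag_scale A1 A2)"
  unfolding linear_conv_bounded_linear[symmetric]
  by (rule linearI) (auto simp: diag_scale_def algebra_simps)

lemma sol_metric_preserving_nonzero: "sol_metric_preserving A1 A2 d \<Longrightarrow> A1 \<noteq> 0 \<and> A2 \<noteq> 0"
  unfolding sol_metric_preserving_def by auto

lemma sol_metric_preserving_inverse:
  assumes "sol_metric_preserving A1 A2 d"
  shows "sol_metric_preserving (1 / A1) (1 / A2) (- d)"
proof -
  have nz: "A1 \<noteq> 0" "A2 \<noteq> 0" using sol_metric_preserving_nonzero[OF assms] by auto
  have "exp (2 * - d) = inverse (exp (2 * d))" "exp (- 2 * - d) = inverse (exp (- 2 * d))"
    by (simp_all add: exp_minus[symmetric])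
  moreover have "exp (2 * d) = 1 / A1\<^sup>2" "exp (- 2 * d) = 1 / A2\<^sup>2"
    using assms nz unfolding sol_metric_preserving_def by (simp_all add: field_simps)
  ultimately show ?thesis using nz unfolding sol_metric_preserving_def by (simp add: power_divide)
qed

lemma sol_affine_inverse:
  assumes "A1 \<noteq> 0" "A2 \<noteq> 0"
  shows "sol_affine (1 / A1) (1 / A2) (- (c1 / A1)) (- (c2 / A2)) (- d) (sol_affine A1 A2 c1 c2 d p) = p"
    and "sol_affine A1 A2 c1 c2 d (sol_affine (1 / A1) (1 / A2) (- (c1 / A1)) (- (c2 / A2)) (- d) p) = p"
  using assms by (cases p, simp add: field_simps)+

lemma has_vector_derivative_sol_affine:
  assumes "(g has_vector_derivative g') (at t)"
  shows "((sol_affine A1 A2 c1 c2 d \<circ> g) has_vector_derivative diag_scale A1 A2 g') (at t)"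
  using bounded_linear.has_vector_derivative[OF bounded_linear_diag_scale assms]
  by (simp add: sol_affine_def o_def has_vector_derivative_add_const)

lemma C1_differentiable_sol_affine:
  assumes "g C1_differentiable_on {0..1}"
  shows "(sol_affine A1 A2 c1 c2 d \<circ> g) C1_differentiable_on {0..1}"
proof -
  have "continuous_on {0..1} (\<lambda>t. vector_derivative g (at t))"
    using assms unfolding C1_differentiable_on_eq by simp
  hence "continuous_on {0..1} (\<lambda>t. diag_scale A1 A2 (vector_derivative g (at t)))"
    by (rule continuous_on_compose2[OF linear_continuous_on[OF bounded_linear_diag_scale]]) auto
  moreover have "((sol_affine A1 A2 c1 c2 d \<circ> g) has_vector_derivative
      diag_scale A1 A2 (vector_derivative g (at t))) (at t)" if "t \<in> {0..1}" for t
    using assms that unfolding C1_differentiable_on_eq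
    by (intro has_vector_derivative_sol_affine) (auto simp: vector_derivative_works)
  ultimately show ?thesis unfolding C1_differentiable_on_def by (intro exI conjI ballI)
qed

lemma sol_length_sol_affine:
  assumes g: "g C1_differentiable_on {0..1}" and d: "sol_metric_preserving A1 A2 d"
  shows "sol_length (sol_affine A1 A2 c1 c2 d \<circ> g) = sol_length g"
  unfolding sol_length_def
proof (rule integral_cong)
  fix t :: real assume t: "t \<in> {0..1}"
  let ?f = "sol_affine A1 A2 c1 c2 d"
  have g': "(g has_vector_derivative vector_derivative g (at t)) (at t)"
    using g t unfolding C1_differentiable_on_eq by (auto simp: vector_derivative_works)
  have "vector_derivative g (at t within {0..1}) = vector_derivative g (at t)"
    using vector_derivative_at_within_ivl[OF g'] t by simp
  moreover have "vector_derivative (?f \<circ> g) (at t within {0..1}) = diag_scale A1 A2 (vector_derivative g (at t))"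
    using vector_derivative_at_within_ivl[OF has_vector_derivative_sol_affine[OF g']] t by simp
  moreover obtain v1 v2 v3 where v: "vector_derivative g (at t) = (v1, v2, v3)" by (metis prod.collapse)
  moreover obtain x y z where xyz: "g t = (x, y, z)" by (metis prod.collapse)
  moreover have "exp (2 * (z + d)) * (A1 * v1)\<^sup>2 = exp (2 * z) * v1\<^sup>2 * (A1\<^sup>2 * exp (2 * d))"
    "exp (- 2 * (z + d)) * (A2 * v2)\<^sup>2 = exp (- 2 * z) * v2\<^sup>2 * (A2\<^sup>2 * exp (- 2 * d))"
    by (simp_all add: exp_add[symmetric] distrib_left power_mult_distrib)
  ultimately show "(let v = vector_derivative (?f \<circ> g) (at t within {0..1}); z = snd (snd ((?f \<circ> g) t)) in
      sqrt (exp (2 * z) * (fst v)\<^sup>2 + exp (- 2 * z) * (fst (snd v))\<^sup>2 + (snd (snd v))\<^sup>2)) =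
    (let v = vector_derivative g (at t within {0..1}); z = snd (snd (g t)) in
      sqrt (exp (2 * z) * (fst v)\<^sup>2 + exp (- 2 * z) * (fst (snd v))\<^sup>2 + (snd (snd v))\<^sup>2))"
    using d unfolding sol_metric_preserving_def by (simp add: Let_def diag_scale_def)
qed

lemma sol_lengths_sol_affine:
  assumes "sol_metric_preserving A1 A2 d"
  shows "{sol_length g | g. g C1_differentiable_on {0..1} \<and> g 0 = p \<and> g 1 = q} \<subseteq>
    {sol_length g | g. g C1_differentiable_on {0..1} \<and>
       g 0 = sol_affine A1 A2 c1 c2 d p \<and> g 1 = sol_affine A1 A2 c1 c2 d q}"
proof
  fix r assume "r \<in> {sol_length g | g. g C1_differentiable_on {0..1} \<and> g 0 = p \<and> g 1 = q}"
  then obtain g where g: "r = sol_length g" "g C1_differentiable_on {0..1}" "g 0 = p" "g 1 = q" by blast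
  let ?g = "sol_affine A1 A2 c1 c2 d \<circ> g"
  have "r = sol_length ?g" using sol_length_sol_affine[OF g(2) assms] g(1) by simp
  moreover have "?g C1_differentiable_on {0..1}" by (rule C1_differentiable_sol_affine[OF g(2)])
  ultimately show "r \<in> {sol_length g | g. g C1_differentiable_on {0..1} \<and>
       g 0 = sol_affine A1 A2 c1 c2 d p \<and> g 1 = sol_affine A1 A2 c1 c2 d q}" using g(3,4) by auto
qed

lemma sol_isometry_sol_affine:
  assumes d: "sol_metric_preserving A1 A2 d"
  shows "sol_isometry (sol_affine A1 A2 c1 c2 d)"
proof -
  let ?f = "sol_affine A1 A2 c1 c2 d"
  let ?h = "sol_affine (1 / A1) (1 / A2) (- (c1 / A1)) (- (c2 / A2)) (- d)"
  have nz: "A1 \<noteq> 0" "A2 \<noteq> 0" using sol_metric_preserving_nonzero[OF d] by auto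
  have "bij ?f" by (rule bij_betw_byWitness[where f' = ?h]) (simp_all add: sol_affine_inverse[OF nz])
  moreover have "sol_dist (?f p) (?f q) = sol_dist p q" for p q
  proof -
    have "{sol_length g | g. g C1_differentiable_on {0..1} \<and> g 0 = ?f p \<and> g 1 = ?f q} =
      {sol_length g | g. g C1_differentiable_on {0..1} \<and> g 0 = p \<and> g 1 = q}"
      using sol_lengths_sol_affine[OF d, of p q c1 c2]
        sol_lengths_sol_affine[OF sol_metric_preserving_inverse[OF d], of "?f p" "?f q" "- (c1 / A1)" "- (c2 / A2)"]
      unfolding sol_affine_inverse(1)[OF nz] by (rule subset_antisym[rotated])
    thus ?thesis unfolding sol_dist_def by simp
  qed
  ultimately show ?thesis unfolding sol_isometry_def by blast
qed

context real_quadratic_unit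
begin

definition log_abs_a :: real where "log_abs_a = ln \<bar>a\<bar>"

lemma log_abs_a_nonzero: "log_abs_a \<noteq> 0"
  unfolding log_abs_a_def using a_nonzero abs_a_neq_1 by simp

definition deck :: "real \<Rightarrow> int \<Rightarrow> sol_pt \<Rightarrow> sol_pt" where
  "deck j m = sol_affine (a powi m) (a_conj powi m) j (gal a j) (- (of_int m * log_abs_a))"

lemma deck_apply:
  "deck j m (x, y, z) = (a powi m * x + j, a_conj powi m * y + gal a j, z - of_int m * log_abs_a)"
  by (simp add: deck_def)

lemma sol_metric_preserving_deck:
  "sol_metric_preserving (a powi m) (a_conj powi m) (- (of_int m * log_abs_a))"
proof -
  have pos: "\<bar>a\<bar> > 0" using a_nonzero by simp
  have "exp (- (of_int m * log_abs_a)) = \<bar>a\<bar> powi (- m)" "exp (of_int m * log_abs_a) = \<bar>a\<bar> powi m"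
    using exp_power_int[of "ln \<bar>a\<bar>"] pos unfolding log_abs_a_def by simp_all
  moreover have "exp (2 * - (of_int m * log_abs_a)) = (exp (- (of_int m * log_abs_a)))\<^sup>2"
    "exp (- 2 * - (of_int m * log_abs_a)) = (exp (of_int m * log_abs_a))\<^sup>2"
    by (simp_all add: power2_eq_square exp_add[symmetric])
  moreover have "(a powi m)\<^sup>2 = (\<bar>a\<bar> powi m)\<^sup>2" "(a_conj powi m)\<^sup>2 = (\<bar>a_conj\<bar> powi m)\<^sup>2"
    by (simp_all add: power_int_abs[symmetric])
  moreover have "\<bar>a\<bar> powi m * \<bar>a\<bar> powi (- m) = 1" using pos by (simp add: power_int_minus)
  moreover have "\<bar>a_conj\<bar> powi m * \<bar>a\<bar> powi m = 1"
    using abs_a_times_abs_a_conj by (simp add: power_int_mult_distrib[symmetric] mult.commute)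
  ultimately show ?thesis unfolding sol_metric_preserving_def
    by (simp add: power_mult_distrib[symmetric])
qed

lemma sol_isometry_deck: "sol_isometry (deck j m)"
  unfolding deck_def by (rule sol_isometry_sol_affine[OF sol_metric_preserving_deck])

lemma deck_comp:
  assumes "j \<in> Zring a" "k \<in> Zring a"
  shows "deck j m \<circ> deck k l = deck (j + a powi m * k) (m + l)"
proof
  fix p :: sol_pt
  obtain x y z where p: "p = (x, y, z)" by (metis prod.collapse)
  have "gal a (j + a powi m * k) = gal a j + a_conj powi m * gal a k"
    using gal_add[OF assms(1) Zring_mult[OF Zring_powi assms(2)]] gal_mult[OF Zring_powi assms(2)]
    by (simp add: gal_powi)
  thus "(deck j m \<circ> deck k l) p = deck (j + a powi m * k) (m + l) p"
    unfolding p o_def deck_apply using a_nonzero a_conj_nonzero by (simp add: power_int_add algebra_simps)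
qed

lemma deck_inj: "deck j m = deck k l \<Longrightarrow> j = k \<and> m = l"
proof -
  assume "deck j m = deck k l"
  hence "deck j m (0, 0, 0) = deck k l (0, 0, 0)" by simp
  thus ?thesis using log_abs_a_nonzero by (simp add: deck_apply)
qed

lemma deck_zero: "deck 0 0 = id"
  using gal_of_int[of 0] by (auto simp: deck_apply)

lemma deck_fixed_point_free:
  assumes "deck j m p = p" shows "j = 0 \<and> m = 0"
proof -
  obtain x y z where p: "p = (x, y, z)" by (metis prod.collapse)
  have "of_int m * log_abs_a = 0" using assms unfolding p by (simp add: deck_apply)
  hence "m = 0" using log_abs_a_nonzero by simp
  thus ?thesis using assms unfolding p by (simp add: deck_apply)
qed

definition deck_group :: "real set \<Rightarrow> (sol_pt \<Rightarrow> sol_pt) set" where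
  "deck_group J = (\<lambda>(j, m). deck j m) ` (J \<times> UNIV)"

lemma monoid_deck_group:
  assumes J: "is_ideal a J" shows "monoid (transf_group (deck_group J))"
proof (rule monoidI)
  fix f g assume "f \<in> carrier (transf_group (deck_group J))" "g \<in> carrier (transf_group (deck_group J))"
  then obtain j m k l where jk: "f = deck j m" "g = deck k l" "j \<in> J" "k \<in> J"
    unfolding transf_group_def deck_group_def by auto
  hence "f \<circ> g = deck (j + a powi m * k) (m + l)" using deck_comp ideal_subset[OF J] by blast
  moreover have "j + a powi m * k \<in> J" using jk ideal_add[OF J] ideal_powi_mult[OF J] by blast
  ultimately show "f \<otimes>\<^bsub>transf_group (deck_group J)\<^esub> g \<in> carrier (transf_group (deck_group J))"
    unfolding transf_group_def deck_group_def by auto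
next
  show "\<one>\<^bsub>transf_group (deck_group J)\<^esub> \<in> carrier (transf_group (deck_group J))"
    unfolding transf_group_def deck_group_def using deck_zero ideal_zero[OF J]
    by (auto intro!: image_eqI[of _ _ "(0, 0)"])
qed (auto simp: transf_group_def)

lemma iso_deck_group:
  assumes J: "is_ideal a J"
  shows "(\<lambda>(j, m). deck j m) \<in> iso (sdp a J) (transf_group (deck_group J))"
proof (rule isoI)
  show "(\<lambda>(j, m). deck j m) \<in> hom (sdp a J) (transf_group (deck_group J))"
  proof (rule homI)
    fix x y assume "x \<in> carrier (sdp a J)" "y \<in> carrier (sdp a J)"
    then obtain j m k l where jk: "x = (j, m)" "y = (k, l)" "j \<in> J" "k \<in> J" by (auto simp: sdp_carrier)
    hence "deck j m \<circ> deck k l = deck (j + a powi m * k) (m + l)"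
      using deck_comp ideal_subset[OF J] by blast
    thus "(case x \<otimes>\<^bsub>sdp a J\<^esub> y of (j, m) \<Rightarrow> deck j m) =
      (case x of (j, m) \<Rightarrow> deck j m) \<otimes>\<^bsub>transf_group (deck_group J)\<^esub> (case y of (j, m) \<Rightarrow> deck j m)"
      by (simp add: jk transf_group_def)
  qed (auto simp: sdp_carrier transf_group_def deck_group_def)
  show "bij_betw (\<lambda>(j, m). deck j m) (carrier (sdp a J)) (carrier (transf_group (deck_group J)))"
    unfolding bij_betw_def sdp_carrier transf_group_def deck_group_def
    using deck_inj by (auto intro: inj_onI)
qed

lemma finite_Zring_box: "finite {j \<in> Zring a. \<bar>j\<bar> \<le> B \<and> \<bar>gal a j\<bar> \<le> B}"
proof -
  define \<delta> where "\<delta> = \<bar>a - a_conj\<bar>"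
  have \<delta>: "\<delta> > 0" unfolding \<delta>_def using a_conj_neq_a by simp
  define Q where "Q = \<lceil>2 * B / \<delta>\<rceil>"
  define P where "P = \<lceil>B + of_int Q * \<bar>a\<bar>\<rceil>"
  have "{j \<in> Zring a. \<bar>j\<bar> \<le> B \<and> \<bar>gal a j\<bar> \<le> B} \<subseteq>
        (\<lambda>(p, q). of_int p + of_int q * a) ` ({-P..P} \<times> {-Q..Q})"
  proof
    fix j assume j: "j \<in> {j \<in> Zring a. \<bar>j\<bar> \<le> B \<and> \<bar>gal a j\<bar> \<le> B}"
    then obtain p q where pq: "j = of_int p + of_int q * a" by (auto elim: ZringE)
    have "j - gal a j = of_int q * (a - a_conj)" using pq gal_coords by (simp add: algebra_simps)
    hence "\<bar>of_int q\<bar> * \<delta> = \<bar>j - gal a j\<bar>" unfolding \<delta>_def by (simp add: abs_mult)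
    also have "\<dots> \<le> 2 * B" using j by auto
    finally have "\<bar>of_int q\<bar> \<le> 2 * B / \<delta>" using \<delta> by (simp add: field_simps)
    also have "\<dots> \<le> of_int Q" unfolding Q_def by simp
    finally have qQ: "\<bar>q\<bar> \<le> Q" by linarith
    have "\<bar>of_int p\<bar> \<le> \<bar>j\<bar> + \<bar>of_int q\<bar> * \<bar>a\<bar>"
      using pq abs_triangle_ineq4[of j "of_int q * a"] by (simp add: abs_mult)
    also have "\<dots> \<le> B + of_int Q * \<bar>a\<bar>" using j qQ by (intro add_mono mult_right_mono) auto
    finally have "\<bar>p\<bar> \<le> P" unfolding P_def by linarith
    thus "j \<in> (\<lambda>(p, q). of_int p + of_int q * a) ` ({-P..P} \<times> {-Q..Q})"
      using qQ pq by (intro image_eqI[of _ _ "(p, q)"]) auto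
  qed
  thus ?thesis by (rule finite_subset) simp
qed

lemma abs_sol_pt_le_norm:
  fixes p :: sol_pt
  shows "\<bar>fst p\<bar> \<le> norm p" "\<bar>fst (snd p)\<bar> \<le> norm p" "\<bar>snd (snd p)\<bar> \<le> norm p"
proof -
  obtain x y z where p: "p = (x, y, z)" by (metis prod.collapse)
  have "norm x \<le> norm p" "norm (y, z) \<le> norm p" unfolding p by (rule norm_fst_le, rule norm_snd_le)
  moreover have "norm y \<le> norm (y, z)" "norm z \<le> norm (y, z)" by (rule norm_fst_le, rule norm_snd_le)
  ultimately show "\<bar>fst p\<bar> \<le> norm p" "\<bar>fst (snd p)\<bar> \<le> norm p" "\<bar>snd (snd p)\<bar> \<le> norm p"
    unfolding p by auto
qed

text \<open>A deck transformation moving a point of the ball of radius \<open>R\<close> into that ball has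
  bounded height \<open>m\<close>, and then bounded \<open>j\<close> in both real embeddings.\<close>
lemma deck_group_proper:
  assumes J: "is_ideal a J" and K: "compact K"
  shows "finite {f \<in> deck_group J. f ` K \<inter> K \<noteq> {}}"
proof -
  obtain R where R: "\<forall>p\<in>K. norm p \<le> R" using compact_imp_bounded[OF K] unfolding bounded_iff by blast
  define M where "M = \<lceil>2 * R / \<bar>log_abs_a\<bar>\<rceil>"
  define B where "B m = R + (\<bar>a powi m\<bar> + \<bar>a_conj powi m\<bar>) * R" for m
  define S where "S = (\<Union>m\<in>{-M..M}. (\<lambda>j. deck j m) ` {j \<in> Zring a. \<bar>j\<bar> \<le> B m \<and> \<bar>gal a j\<bar> \<le> B m})"
  have "finite S" unfolding S_def by (intro finite_UN_I finite_atLeastAtMost_int finite_imageI finite_Zring_box)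
  moreover have "{f \<in> deck_group J. f ` K \<inter> K \<noteq> {}} \<subseteq> S"
  proof
    fix f assume f: "f \<in> {f \<in> deck_group J. f ` K \<inter> K \<noteq> {}}"
    then obtain j m where jm: "f = deck j m" "j \<in> J" unfolding deck_group_def by auto
    obtain x y z where p: "(x, y, z) \<in> K" "f (x, y, z) \<in> K" using f by auto
    have "\<bar>x\<bar> \<le> R" "\<bar>y\<bar> \<le> R" "\<bar>z\<bar> \<le> R"
      using abs_sol_pt_le_norm[of "(x, y, z)"] R p(1) by (auto dest: order_trans)
    moreover have "\<bar>a powi m * x + j\<bar> \<le> R" "\<bar>a_conj powi m * y + gal a j\<bar> \<le> R"
      "\<bar>z - of_int m * log_abs_a\<bar> \<le> R"
      using abs_sol_pt_le_norm[of "f (x, y, z)"] R p(2) unfolding jm deck_apply by (auto dest: order_trans)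
    moreover have "\<bar>a powi m * x\<bar> \<le> \<bar>a powi m\<bar> * R" "\<bar>a_conj powi m * y\<bar> \<le> \<bar>a_conj powi m\<bar> * R"
      using calculation by (simp_all add: abs_mult mult_left_mono)
    ultimately have "\<bar>j\<bar> \<le> B m" "\<bar>gal a j\<bar> \<le> B m" "\<bar>of_int m\<bar> * \<bar>log_abs_a\<bar> \<le> 2 * R"
      unfolding B_def by (simp_all add: abs_mult[symmetric] algebra_simps)
        (smt (verit) mult_nonneg_nonneg abs_ge_zero)+
    moreover from this(3) have "\<bar>of_int m\<bar> \<le> 2 * R / \<bar>log_abs_a\<bar>"
      using log_abs_a_nonzero by (simp add: field_simps)
    hence "\<bar>of_int m\<bar> \<le> (of_int M :: real)" unfolding M_def by linarith
    hence "m \<in> {-M..M}" by auto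
    moreover have "j \<in> {j \<in> Zring a. \<bar>j\<bar> \<le> B m \<and> \<bar>gal a j\<bar> \<le> B m}"
      using calculation jm ideal_subset[OF J] by blast
    ultimately show "f \<in> S" unfolding S_def jm(1) by blast
  qed
  ultimately show ?thesis by (rule finite_subset[rotated])
qed

lemma abs_fractional_combination_le:
  fixes s r c x :: real
  shows "\<bar>x * ((s - of_int \<lfloor>s\<rfloor>) + (r - of_int \<lfloor>r\<rfloor>) * c)\<bar> \<le> \<bar>x\<bar> * (1 + \<bar>c\<bar>)"
proof -
  have "\<bar>(s - of_int \<lfloor>s\<rfloor>) + (r - of_int \<lfloor>r\<rfloor>) * c\<bar> \<le> \<bar>s - of_int \<lfloor>s\<rfloor>\<bar> + \<bar>r - of_int \<lfloor>r\<rfloor>\<bar> * \<bar>c\<bar>"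
    by (metis abs_triangle_ineq abs_mult)
  also have "\<dots> \<le> 1 + 1 * \<bar>c\<bar>" by (intro add_mono mult_right_mono) linarith+
  finally show ?thesis by (simp add: abs_mult mult_left_mono)
qed

text \<open>\<open>J\<close> is a lattice in \<open>\<real>\<^sup>2\<close> under the two real embeddings: write \<open>(u, v)\<close> in the
  basis \<open>(x\<^sub>0, gal x\<^sub>0), (a x\<^sub>0, gal (a x\<^sub>0))\<close> and round the coordinates down.\<close>
lemma ideal_coarsely_dense:
  assumes J: "nonzero_ideal a J"
  shows "\<exists>R. \<forall>u v. \<exists>j\<in>J. \<bar>u - j\<bar> \<le> R \<and> \<bar>v - gal a j\<bar> \<le> R"
proof -
  obtain x0 where I: "is_ideal a J" and x0: "x0 \<in> J" "x0 \<noteq> 0" using J by (rule nonzero_idealE)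
  have x0Z: "x0 \<in> Zring a" using x0 ideal_subset[OF I] by blast
  define y0 where "y0 = gal a x0"
  have y0: "y0 \<noteq> 0" unfolding y0_def using gal_nonzero[OF x0Z x0(2)] .
  define R where "R = \<bar>x0\<bar> * (1 + \<bar>a\<bar>) + \<bar>y0\<bar> * (1 + \<bar>a_conj\<bar>)"
  have "\<exists>j\<in>J. \<bar>u - j\<bar> \<le> R \<and> \<bar>v - gal a j\<bar> \<le> R" for u v
  proof -
    define r where "r = (u / x0 - v / y0) / (a - a_conj)"
    define s where "s = u / x0 - r * a"
    have su: "s + r * a = u / x0" unfolding s_def by simp
    have "r * (a - a_conj) = u / x0 - v / y0" unfolding r_def using a_conj_neq_a by simp
    hence sv: "s + r * a_conj = v / y0" unfolding s_def by (simp add: algebra_simps)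
    define j where "j = x0 * (of_int \<lfloor>s\<rfloor> + of_int \<lfloor>r\<rfloor> * a)"
    have "j \<in> J" unfolding j_def using ideal_mult[OF I ZringI x0(1)] by (simp add: mult.commute)
    moreover have "gal a j = y0 * (of_int \<lfloor>s\<rfloor> + of_int \<lfloor>r\<rfloor> * a_conj)"
      unfolding j_def y0_def using gal_mult[OF x0Z ZringI] gal_coords by simp
    hence "v - gal a j = y0 * ((s - of_int \<lfloor>s\<rfloor>) + (r - of_int \<lfloor>r\<rfloor>) * a_conj)"
      using sv y0 by (simp add: field_simps)
    hence "\<bar>v - gal a j\<bar> \<le> \<bar>y0\<bar> * (1 + \<bar>a_conj\<bar>)" using abs_fractional_combination_le by metis
    moreover have "u - j = x0 * ((s - of_int \<lfloor>s\<rfloor>) + (r - of_int \<lfloor>r\<rfloor>) * a)"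
      using su x0(2) unfolding j_def by (simp add: field_simps)
    hence "\<bar>u - j\<bar> \<le> \<bar>x0\<bar> * (1 + \<bar>a\<bar>)" using abs_fractional_combination_le by metis
    moreover have "\<bar>x0\<bar> * (1 + \<bar>a\<bar>) \<ge> 0" "\<bar>y0\<bar> * (1 + \<bar>a_conj\<bar>) \<ge> 0" by simp_all
    ultimately show ?thesis unfolding R_def by (meson add_increasing add_increasing2 order_trans)
  qed
  thus ?thesis by blast
qed

text \<open>A fundamental domain: translate vertically into a slab of height \<open>\<bar>log \<bar>a\<bar>\<bar>\<close>,
  then horizontally by an element of \<open>J\<close>.\<close>
lemma deck_group_cocompact:
  assumes J: "nonzero_ideal a J"
  shows "\<exists>K. compact K \<and> (\<Union>f\<in>deck_group J. f ` K) = UNIV"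
proof -
  have I: "is_ideal a J" using J unfolding nonzero_ideal_def by simp
  obtain R where R: "\<forall>u v. \<exists>j\<in>J. \<bar>u - j\<bar> \<le> R \<and> \<bar>v - gal a j\<bar> \<le> R"
    using ideal_coarsely_dense[OF J] by blast
  define \<Lambda> where "\<Lambda> = \<bar>log_abs_a\<bar>"
  have \<Lambda>: "\<Lambda> > 0" unfolding \<Lambda>_def using log_abs_a_nonzero by simp
  define K :: "sol_pt set" where "K = {-R..R} \<times> {-R..R} \<times> {0..\<Lambda>}"
  have "P \<in> (\<Union>f\<in>deck_group J. f ` K)" for P
  proof -
    obtain X Y Z where P: "P = (X, Y, Z)" by (metis prod.collapse)
    define k where "k = \<lfloor>Z / \<Lambda>\<rfloor>"
    have "of_int k * \<Lambda> \<le> Z" "Z < (of_int k + 1) * \<Lambda>"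
      using \<Lambda> floor_divide_lower floor_divide_upper unfolding k_def by blast+
    hence z0: "Z - of_int k * \<Lambda> \<in> {0..\<Lambda>}" by (simp add: algebra_simps)
    define m where "m = (if log_abs_a > 0 then - k else k)"
    have mL: "of_int m * log_abs_a = - (of_int k * \<Lambda>)" unfolding m_def \<Lambda>_def by auto
    obtain j' where j': "j' \<in> J" "\<bar>a powi (- m) * X - j'\<bar> \<le> R" "\<bar>a_conj powi (- m) * Y - gal a j'\<bar> \<le> R"
      using R by blast
    have "gal a (a powi m * j') = a_conj powi m * gal a j'"
      using gal_mult[OF Zring_powi] ideal_subset[OF I] j'(1) gal_powi by auto
    moreover have "a powi m * a powi (- m) = 1" "a_conj powi m * a_conj powi (- m) = 1"
      using a_nonzero a_conj_nonzero by (simp_all add: power_int_minus)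
    ultimately have "deck (a powi m * j') m
        (a powi (- m) * X - j', a_conj powi (- m) * Y - gal a j', Z - of_int k * \<Lambda>) = P"
      unfolding deck_apply P mL by (simp add: right_diff_distrib mult.assoc[symmetric])
    moreover have "deck (a powi m * j') m \<in> deck_group J"
      unfolding deck_group_def using ideal_powi_mult[OF I j'(1)] by auto
    moreover have "(a powi (- m) * X - j', a_conj powi (- m) * Y - gal a j', Z - of_int k * \<Lambda>) \<in> K"
      unfolding K_def using j' z0 by auto
    ultimately show ?thesis by blast
  qed
  moreover have "compact K" unfolding K_def by (intro compact_Times compact_Icc)
  ultimately show ?thesis by blast
qed

lemma sol3_group_sdp:
  assumes J: "nonzero_ideal a J" shows "sol3_group (sdp a J)"
proof -
  have I: "is_ideal a J" using J unfolding nonzero_ideal_def by simp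
  have iso: "sdp a J \<cong> transf_group (deck_group J)" using iso_deck_group[OF I] by (rule is_isoI)
  have "\<forall>f\<in>deck_group J. sol_isometry f" unfolding deck_group_def using sol_isometry_deck by auto
  moreover have "\<forall>f\<in>deck_group J. \<forall>p. f p = p \<longrightarrow> f = id"
    unfolding deck_group_def using deck_fixed_point_free deck_zero by fastforce
  moreover have "group (transf_group (deck_group J))"
    using group.iso_imp_group[OF group_sdp[OF I] iso monoid_deck_group[OF I]] .
  ultimately show ?thesis unfolding sol3_group_def
    using group_sdp[OF I] iso deck_group_proper[OF I] deck_group_cocompact[OF J] by blast
qed

end

lemma quadratic_unit_imp_locale: "quadratic_unit a \<Longrightarrow> \<exists>t n. real_quadratic_unit a t n"
  unfolding quadratic_unit_def real_quadratic_unit_def by blast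

theorem theorem1:
  shows "(\<forall>a J. quadratic_unit a \<and> \<not> root_of_unity a \<and> nonzero_ideal a J
            \<longrightarrow> sol3_group (sdp a J))
    \<and> (\<forall>a b J K. quadratic_unit a \<and> \<not> root_of_unity a \<and> nonzero_ideal a J
            \<and> quadratic_unit b \<and> \<not> root_of_unity b \<and> nonzero_ideal b K \<longrightarrow>
          (sdp a J \<cong> sdp b K \<longleftrightarrow>
             ((b = a \<or> b = inverse a) \<and> same_class a K J) \<or>
             ((b = gconj a \<or> b = inverse (gconj a)) \<and> same_class a K (gal a ` J))))
    \<and> (\<forall>a. quadratic_unit a \<and> \<not> root_of_unity a \<longrightarrow>
          (\<exists>F. finite F \<and> (\<forall>J\<in>F. nonzero_ideal a J) \<and>
               (\<forall>J. nonzero_ideal a J \<longrightarrow> (\<exists>J'\<in>F. sdp a J \<cong> sdp a J'))))"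
proof (intro conjI allI impI)
  fix a J assume h: "quadratic_unit a \<and> \<not> root_of_unity a \<and> nonzero_ideal a J"
  then obtain t n where "real_quadratic_unit a t n" using quadratic_unit_imp_locale by blast
  thus "sol3_group (sdp a J)" using real_quadratic_unit.sol3_group_sdp h by blast
next
  fix a b J K assume h: "quadratic_unit a \<and> \<not> root_of_unity a \<and> nonzero_ideal a J
            \<and> quadratic_unit b \<and> \<not> root_of_unity b \<and> nonzero_ideal b K"
  then obtain t n t' n' where a: "real_quadratic_unit a t n" and b: "real_quadratic_unit b t' n'"
    using quadratic_unit_imp_locale by blast
  show "sdp a J \<cong> sdp b K \<longleftrightarrow>
             ((b = a \<or> b = inverse a) \<and> same_class a K J) \<or>
             ((b = gconj a \<or> b = inverse (gconj a)) \<and> same_class a K (gal a ` J))"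
    using real_quadratic_unit.sdp_iso_iff[OF a b] h by simp
next
  fix a assume "quadratic_unit a \<and> \<not> root_of_unity a"
  then obtain t n where "real_quadratic_unit a t n" using quadratic_unit_imp_locale by blast
  thus "\<exists>F. finite F \<and> (\<forall>J\<in>F. nonzero_ideal a J) \<and>
               (\<forall>J. nonzero_ideal a J \<longrightarrow> (\<exists>J'\<in>F. sdp a J \<cong> sdp a J'))"
    by (rule real_quadratic_unit.finite_sdp_classes)
qed

end
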